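(* Let $X\colon\mathcal H\leftarrow\mathcal G$ be a groupoid correspondence and $\xi\in\mathfrak S(X)$. Then there are finitely many $a_1,\dots,a_n\in\mathfrak S(\mathcal G)$ with $\langle\xi|\xi\rangle=\sum_{i=1}^n a_i*a_i^*$. Moreover, if $\xi\neq0$, then $\langle\xi|\xi\rangle\neq0$.
   Context: Groupoids are étale ($r,s$ local homeomorphisms, continuous multiplication and inversion) with Hausdorff locally compact object space; arrow spaces may be non-Hausdorff. A groupoid correspondence $X\colon\mathcal H\leftarrow\mathcal G$: space with commuting continuous left $\mathcal H$-action and right $\mathcal G$-action (anchor $s\colon X\to\mathcal G^0$), $s$ a local homeomorphism, right action free and proper. For a locally compact, locally Hausdorff space $Y$, $\mathfrak S(Y)$ is the linear span of functions on $Y$ obtained by extending by zero functions in $C_c(V)$ for open Hausdorff $V\subseteq Y$. $\mathfrak S(\mathcal G)$ is a $*$-algebra with $\xi*\eta(g)=\sum_{h\in\mathcal G^{r(g)}}\xi(h)\eta(h^{-1}g)$, $\xi^*(g)=\overline{\xi(g^{-1})}$. The $\mathfrak S(\mathcal G)$-valued inner product on $\mathfrak S(X)$ is $\langle\xi|\eta\rangle(g)=\sum_{x\in X:\,s(x)=r(g)}\overline{\xi(x)}\eta(xg)$. *)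

theory Defs
  imports "HOL-Analysis.Analysis"
begin

definition local_homeomorphism :: "'a topology \<Rightarrow> 'b topology \<Rightarrow> ('a \<Rightarrow> 'b) \<Rightarrow> bool" where
  "local_homeomorphism X Y f \<longleftrightarrow>
     continuous_map X Y f \<and>
     (\<forall>x\<in>topspace X. \<exists>U. openin X U \<and> x \<in> U \<and> openin Y (f ` U) \<and>
        homeomorphic_map (subtopology X U) (subtopology Y (f ` U)) f)"

text \<open>Arrow space: the topological space G (arrows = topspace G, possibly non-Hausdorff);
  object space: the set of units G0 (a subset of the arrows) with the subspace topology,
  required Hausdorff and locally compact. r, s range, source; m multiplication
  (m g h defined for s g = r h); i inversion.\<close>
definition etale_groupoid ::
  "'g topology \<Rightarrow> 'g set \<Rightarrow> ('g \<Rightarrow> 'g) \<Rightarrow> ('g \<Rightarrow> 'g) \<Rightarrow> ('g \<Rightarrow> 'g \<Rightarrow> 'g) \<Rightarrow> ('g \<Rightarrow> 'g) \<Rightarrow> bool" where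
  "etale_groupoid G G0 r s m i \<longleftrightarrow>
     G0 \<subseteq> topspace G \<and>
     (\<forall>g\<in>topspace G. r g \<in> G0 \<and> s g \<in> G0 \<and> i g \<in> topspace G) \<and>
     (\<forall>u\<in>G0. r u = u \<and> s u = u) \<and>
     (\<forall>g\<in>topspace G. \<forall>h\<in>topspace G. s g = r h \<longrightarrow>
         m g h \<in> topspace G \<and> r (m g h) = r g \<and> s (m g h) = s h) \<and>
     (\<forall>g\<in>topspace G. \<forall>h\<in>topspace G. \<forall>k\<in>topspace G. s g = r h \<longrightarrow> s h = r k \<longrightarrow>
         m (m g h) k = m g (m h k)) \<and>
     (\<forall>g\<in>topspace G. m (r g) g = g \<and> m g (s g) = g) \<and>
     (\<forall>g\<in>topspace G. r (i g) = s g \<and> s (i g) = r g \<and> m g (i g) = r g \<and> m (i g) g = s g) \<and>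
     Hausdorff_space (subtopology G G0) \<and> locally_compact_space (subtopology G G0) \<and>
     local_homeomorphism G (subtopology G G0) r \<and>
     local_homeomorphism G (subtopology G G0) s \<and>
     continuous_map (subtopology (prod_topology G G) {(g, h). g \<in> topspace G \<and> h \<in> topspace G \<and> s g = r h})
        G (\<lambda>(g, h). m g h) \<and>
     continuous_map G G i"

definition groupoid_correspondence ::
  "'h topology \<Rightarrow> 'h set \<Rightarrow> ('h \<Rightarrow> 'h) \<Rightarrow> ('h \<Rightarrow> 'h) \<Rightarrow> ('h \<Rightarrow> 'h \<Rightarrow> 'h) \<Rightarrow> ('h \<Rightarrow> 'h) \<Rightarrow>
   'x topology \<Rightarrow> ('x \<Rightarrow> 'h) \<Rightarrow> ('h \<Rightarrow> 'x \<Rightarrow> 'x) \<Rightarrow> ('x \<Rightarrow> 'g) \<Rightarrow> ('x \<Rightarrow> 'g \<Rightarrow> 'x) \<Rightarrow>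
   'g topology \<Rightarrow> 'g set \<Rightarrow> ('g \<Rightarrow> 'g) \<Rightarrow> ('g \<Rightarrow> 'g) \<Rightarrow> ('g \<Rightarrow> 'g \<Rightarrow> 'g) \<Rightarrow> ('g \<Rightarrow> 'g) \<Rightarrow> bool" where
  "groupoid_correspondence H H0 rH sH mH iH X rX actL sX actR G G0 rG sG mG iG \<longleftrightarrow>
     etale_groupoid H H0 rH sH mH iH \<and> etale_groupoid G G0 rG sG mG iG \<and>
     \<comment> \<open>left action of H\<close>
     continuous_map X (subtopology H H0) rX \<and>
     (\<forall>h\<in>topspace H. \<forall>x\<in>topspace X. sH h = rX x \<longrightarrow>
        actL h x \<in> topspace X \<and> rX (actL h x) = rH h \<and> sX (actL h x) = sX x) \<and>
     (\<forall>h1\<in>topspace H. \<forall>h2\<in>topspace H. \<forall>x\<in>topspace X. sH h1 = rH h2 \<longrightarrow> sH h2 = rX x \<longrightarrow>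
        actL (mH h1 h2) x = actL h1 (actL h2 x)) \<and>
     (\<forall>x\<in>topspace X. actL (rX x) x = x) \<and>
     continuous_map (subtopology (prod_topology H X) {(h, x). h \<in> topspace H \<and> x \<in> topspace X \<and> sH h = rX x})
        X (\<lambda>(h, x). actL h x) \<and>
     \<comment> \<open>right action of G\<close>
     local_homeomorphism X (subtopology G G0) sX \<and>
     (\<forall>x\<in>topspace X. \<forall>g\<in>topspace G. sX x = rG g \<longrightarrow>
        actR x g \<in> topspace X \<and> sX (actR x g) = sG g \<and> rX (actR x g) = rX x) \<and>
     (\<forall>x\<in>topspace X. \<forall>g1\<in>topspace G. \<forall>g2\<in>topspace G. sX x = rG g1 \<longrightarrow> sG g1 = rG g2 \<longrightarrow>
        actR x (mG g1 g2) = actR (actR x g1) g2) \<and>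
     (\<forall>x\<in>topspace X. actR x (sX x) = x) \<and>
     continuous_map (subtopology (prod_topology X G) {(x, g). x \<in> topspace X \<and> g \<in> topspace G \<and> sX x = rG g})
        X (\<lambda>(x, g). actR x g) \<and>
     \<comment> \<open>the actions commute\<close>
     (\<forall>h\<in>topspace H. \<forall>x\<in>topspace X. \<forall>g\<in>topspace G. sH h = rX x \<longrightarrow> sX x = rG g \<longrightarrow>
        actR (actL h x) g = actL h (actR x g)) \<and>
     \<comment> \<open>the right action is free and proper\<close>
     (\<forall>x\<in>topspace X. \<forall>g\<in>topspace G. sX x = rG g \<longrightarrow> actR x g = x \<longrightarrow> g = sX x) \<and>
     proper_map (subtopology (prod_topology X G) {(x, g). x \<in> topspace X \<and> g \<in> topspace G \<and> sX x = rG g})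
        (prod_topology X X) (\<lambda>(x, g). (x, actR x g))"

definition Cc_extension :: "'y topology \<Rightarrow> ('y \<Rightarrow> complex) \<Rightarrow> bool" where
  "Cc_extension Y f \<longleftrightarrow>
     (\<exists>V. openin Y V \<and> Hausdorff_space (subtopology Y V) \<and>
          continuous_map (subtopology Y V) euclidean f \<and>
          (\<exists>K. compactin (subtopology Y V) K \<and> (\<forall>y\<in>V - K. f y = 0)) \<and>
          (\<forall>y. y \<notin> V \<longrightarrow> f y = 0))"

definition frakS :: "'y topology \<Rightarrow> ('y \<Rightarrow> complex) set" where
  "frakS Y = {f. \<exists>(n::nat) c b. (\<forall>k<n. Cc_extension Y (b k)) \<and>
                   f = (\<lambda>y. \<Sum>k<n. c k * b k y)}"

definition conv :: "'g topology \<Rightarrow> ('g \<Rightarrow> 'g) \<Rightarrow> ('g \<Rightarrow> 'g \<Rightarrow> 'g) \<Rightarrow> ('g \<Rightarrow> 'g) \<Rightarrow>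
    ('g \<Rightarrow> complex) \<Rightarrow> ('g \<Rightarrow> complex) \<Rightarrow> 'g \<Rightarrow> complex" where
  "conv G r m i \<xi> \<eta> g =
     (if g \<in> topspace G then
        (\<Sum>\<^sub>\<infinity>h\<in>{h \<in> topspace G. r h = r g}. \<xi> h * \<eta> (m (i h) g))
      else 0)"

definition invol :: "'g topology \<Rightarrow> ('g \<Rightarrow> 'g) \<Rightarrow> ('g \<Rightarrow> complex) \<Rightarrow> 'g \<Rightarrow> complex" where
  "invol G i \<xi> g = (if g \<in> topspace G then cnj (\<xi> (i g)) else 0)"

definition corr_inner :: "'x topology \<Rightarrow> ('x \<Rightarrow> 'g) \<Rightarrow> ('x \<Rightarrow> 'g \<Rightarrow> 'x) \<Rightarrow> 'g topology \<Rightarrow> ('g \<Rightarrow> 'g) \<Rightarrow>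
    ('x \<Rightarrow> complex) \<Rightarrow> ('x \<Rightarrow> complex) \<Rightarrow> 'g \<Rightarrow> complex" where
  "corr_inner X sX actR G r \<xi> \<eta> g =
     (if g \<in> topspace G then
        (\<Sum>\<^sub>\<infinity>x\<in>{x \<in> topspace X. sX x = r g}. cnj (\<xi> x) * \<eta> (actR x g))
      else 0)"

end

theory Submission
  imports Defs
begin

text \<open>
  Cover the support of \<open>\<xi>\<close> by finitely many slices \<open>U\<^sub>j \<subseteq> X\<close>, i.e. open sets on which the
  anchor map is a homeomorphism onto an open set of units, and choose bumps \<open>\<psi>\<^sub>j\<close> supported in
  them. Because the action is free and proper, the orbit sums
  \<open>\<Psi>\<^sub>j x = \<Sum>\<^sub>g (\<psi>\<^sub>j (x g))\<^sup>2\<close> are locally finite, hence continuous, and they are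
  invariant under the action; dividing each \<open>\<psi>\<^sub>j\<close> by \<open>sqrt (max (\<Sum>\<^sub>j \<Psi>\<^sub>j) 1)\<close>
  makes \<open>\<Sum>\<^sub>j \<Psi>\<^sub>j = 1\<close> on the support of \<open>\<xi>\<close>. For \<open>a\<^sub>j = \<langle>\<xi>|\<psi>\<^sub>j\<rangle>\<close> only one point
  \<open>x\<close> of a fibre is moved into \<open>U\<^sub>j\<close> by a given arrow, which gives
  \<open>(a\<^sub>j * a\<^sub>j\<^sup>*) g = \<Sum>\<^sub>x cnj (\<xi> x) \<xi> (x g) \<Psi>\<^sub>j x\<close>; summing over \<open>j\<close> yields
  \<open>\<langle>\<xi>|\<xi>\<rangle>\<close>. Finally \<open>\<langle>\<xi>|\<xi>\<rangle>\<close> evaluated at the unit \<open>sX x\<close> is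
  \<open>\<Sum> |\<xi> y|\<^sup>2\<close> over the fibre of \<open>x\<close>, which is positive when \<open>\<xi> x \<noteq> 0\<close>.
\<close>

lemma infsum_eq_sum_superset:
  fixes f :: "'a \<Rightarrow> 'b::{comm_monoid_add,t2_space}"
  assumes "finite B" "B \<subseteq> A" "\<And>x. x \<in> A - B \<Longrightarrow> f x = 0"
  shows "infsum f A = sum f B"
proof -
  have "infsum f A = infsum f B"
    by (rule infsum_cong_neutral) (use assms in auto)
  with assms(1) show ?thesis by simp
qed

lemma compactin_finite_subcover_indexed:
  assumes "compactin X S" "\<And>y. y \<in> S \<Longrightarrow> openin X (V y) \<and> y \<in> V y"
  obtains F where "finite F" "F \<subseteq> S" "S \<subseteq> (\<Union>y\<in>F. V y)"
proof -
  have "\<exists>\<F>. finite \<F> \<and> \<F> \<subseteq> V ` S \<and> S \<subseteq> \<Union>\<F>"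
    by (rule compactinD[OF assms(1)]) (use assms(2) in auto)
  then show ?thesis
    using that by (auto simp: ex_finite_subset_image)
qed

lemma local_homeomorphism_locally_injective:
  assumes "local_homeomorphism Y Z p" "y \<in> topspace Y"
  obtains U where "openin Y U" "y \<in> U" "inj_on p U"
proof -
  obtain U where U: "openin Y U" "y \<in> U" "homeomorphic_map (subtopology Y U) (subtopology Z (p ` U)) p"
    using assms unfolding local_homeomorphism_def by blast
  then have "inj_on p U"
    using homeomorphic_imp_injective_map openin_subset by (metis topspace_subtopology_subset)
  with U that show ?thesis by blast
qed

lemma local_homeomorphism_compact_fibre_finite:
  assumes p: "local_homeomorphism Y Z p" and T: "compactin Y T" and fibre: "\<And>y. y \<in> T \<Longrightarrow> p y = z"
  shows "finite T"
proof -
  have "\<forall>y\<in>T. \<exists>U. openin Y U \<and> y \<in> U \<and> inj_on p U"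
    using local_homeomorphism_locally_injective[OF p] compactin_subset_topspace[OF T] by (metis subsetD)
  then obtain V where V: "\<And>y. y \<in> T \<Longrightarrow> openin Y (V y) \<and> y \<in> V y \<and> inj_on p (V y)"
    by metis
  then obtain F where F: "finite F" "F \<subseteq> T" "T \<subseteq> (\<Union>y\<in>F. V y)"
    using compactin_finite_subcover_indexed[OF T] by metis
  have "T \<subseteq> F"
  proof
    fix t assume t: "t \<in> T"
    then obtain y where "y \<in> F" "t \<in> V y" using F by blast
    have "p t = p y"
      using fibre t \<open>y \<in> F\<close> F(2) by auto
    moreover have "inj_on p (V y)" "y \<in> V y"
      using V \<open>y \<in> F\<close> F(2) by auto
    ultimately have "t = y"
      using \<open>t \<in> V y\<close> inj_onD by metis
    with \<open>y \<in> F\<close> show "t \<in> F" by simp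
  qed
  with F show ?thesis by (meson finite_subset)
qed

lemma closedin_fibre:
  assumes "Hausdorff_space Z" "continuous_map Y Z p"
  shows "closedin Y {y \<in> topspace Y. p y = z}"
proof (cases "z \<in> topspace Z")
  case True
  then have "closedin Y {y \<in> topspace Y. p y \<in> {z}}"
    using assms closedin_continuous_map_preimage closedin_Hausdorff_singleton by metis
  then show ?thesis by simp
next
  case False
  then have "{y \<in> topspace Y. p y = z} = {}"
    using continuous_map_funspace[OF assms(2)] by auto
  then show ?thesis by (metis closedin_empty)
qed

lemma continuous_map_if_locally:
  assumes "\<And>x. x \<in> topspace X \<Longrightarrow> \<exists>W. openin X W \<and> x \<in> W \<and> continuous_map (subtopology X W) Y f"
  shows "continuous_map X Y f"
proof -
  obtain W where W: "\<And>x. x \<in> topspace X \<Longrightarrow> openin X (W x) \<and> x \<in> W x \<and> continuous_map (subtopology X (W x)) Y f"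
    using assms by metis
  show ?thesis
    by (rule pasting_lemma[of "topspace X" X W Y "\<lambda>_. f" f]) (use W in auto)
qed

lemma homeomorphic_map_inv_into:
  assumes h: "homeomorphic_map (subtopology X U) (subtopology Y (f ` U)) f" and U: "U \<subseteq> topspace X"
  shows "continuous_map (subtopology Y (f ` U)) (subtopology X U) (inv_into U f)"
    and "inj_on f U"
proof -
  have top: "topspace (subtopology X U) = U"
    using U by auto
  then show inj: "inj_on f U"
    using h homeomorphic_imp_injective_map by metis
  have "f ` U = topspace Y \<inter> f ` U"
    using homeomorphic_imp_surjective_map[OF h] top by simp
  then have "f ` U \<subseteq> topspace Y"
    by blast
  have "open_map (subtopology X U) (subtopology Y (f ` U)) f"
    using h homeomorphic_eq_everything_map by blast
  moreover have "f x \<in> topspace (subtopology Y (f ` U)) \<and> inv_into U f (f x) = x"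
    if "x \<in> topspace (subtopology X U)" for x
    using that top inj \<open>f ` U \<subseteq> topspace Y\<close> by auto
  moreover have "inv_into U f y \<in> topspace (subtopology X U) \<and> f (inv_into U f y) = y"
    if "y \<in> topspace (subtopology Y (f ` U))" for y
    using that top by (auto simp: inv_into_into f_inv_into_f)
  ultimately show "continuous_map (subtopology Y (f ` U)) (subtopology X U) (inv_into U f)"
    using open_eq_continuous_inverse_map by blast
qed

lemma homeomorphic_map_open_subset:
  assumes h: "homeomorphic_map (subtopology X U) (subtopology Y (f ` U)) f"
    and U: "openin Y (f ` U)" and V: "openin X V" "V \<subseteq> U"
  shows "homeomorphic_map (subtopology X V) (subtopology Y (f ` V)) f"
    and "openin Y (f ` V)"
proof -
  have VX: "V \<subseteq> topspace X" and fUY: "f ` U \<subseteq> topspace Y"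
    using openin_subset V(1) U by auto
  have "homeomorphic_map (subtopology (subtopology X U) V) (subtopology (subtopology Y (f ` U)) (f ` V)) f"
    by (rule homeomorphic_map_subtopologies[OF h]) (use VX fUY V(2) in auto)
  moreover have "subtopology (subtopology X U) V = subtopology X V"
    using V(2) by (simp add: subtopology_subtopology Int_absorb1)
  moreover have "subtopology (subtopology Y (f ` U)) (f ` V) = subtopology Y (f ` V)"
    using V(2) by (simp add: subtopology_subtopology Int_absorb1 image_mono)
  ultimately show "homeomorphic_map (subtopology X V) (subtopology Y (f ` V)) f"
    by simp
  have "openin (subtopology X U) V"
    unfolding openin_subtopology using V by blast
  then have "openin (subtopology Y (f ` U)) (f ` V)"
    using homeomorphic_imp_open_map[OF h] unfolding open_map_def by blast
  then show "openin Y (f ` V)"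
    using openin_trans_full U by blast
qed

lemma Hausdorff_space_separate_finite:
  assumes Z: "Hausdorff_space Z" and "finite S" and S: "S \<subseteq> topspace Z"
  obtains W where "\<And>a. a \<in> S \<Longrightarrow> openin Z (W a) \<and> a \<in> W a"
    "\<And>a b. a \<in> S \<Longrightarrow> b \<in> S \<Longrightarrow> a \<noteq> b \<Longrightarrow> W a \<inter> W b = {}"
proof -
  have "\<exists>U V. openin Z U \<and> openin Z V \<and> a \<in> U \<and> b \<in> V \<and> disjnt U V"
    if "a \<in> S" "b \<in> S" "a \<noteq> b" for a b
    using Z S that unfolding Hausdorff_space_def by blast
  then obtain U V where UV: "\<And>a b. a \<in> S \<Longrightarrow> b \<in> S \<Longrightarrow> a \<noteq> b \<Longrightarrow>
      openin Z (U a b) \<and> openin Z (V a b) \<and> a \<in> U a b \<and> b \<in> V a b \<and> disjnt (U a b) (V a b)"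
    by metis
  define W where "W a = topspace Z \<inter> (\<Inter>b\<in>S - {a}. U a b \<inter> V b a)" for a
  show ?thesis
  proof
    fix a assume "a \<in> S"
    then show "openin Z (W a) \<and> a \<in> W a"
      unfolding W_def using UV S \<open>finite S\<close> by (auto intro!: openin_Int_Inter)
  next
    fix a b assume "a \<in> S" "b \<in> S" "a \<noteq> b"
    then have "W a \<subseteq> U a b" "W b \<subseteq> V a b"
      unfolding W_def by auto
    with UV[OF \<open>a \<in> S\<close> \<open>b \<in> S\<close> \<open>a \<noteq> b\<close>] show "W a \<inter> W b = {}"
      by (auto simp: disjnt_def)
  qed
qed

lemma locally_compact_Hausdorff_bump:
  assumes "Hausdorff_space Y" "locally_compact_space Y" "x \<in> topspace Y"
  obtains N L \<psi> where "openin Y N" "x \<in> N" "compactin Y L" "N \<subseteq> L"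
    "continuous_map Y euclideanreal \<psi>" "\<And>y. y \<in> N \<Longrightarrow> \<psi> y = 1" "\<And>y. y \<notin> L \<Longrightarrow> \<psi> y = 0"
proof -
  have reg: "regular_space Y"
    using locally_compact_Hausdorff_imp_regular_space assms(1,2) by blast
  then have "completely_regular_space Y"
    using completely_regular_eq_regular_space assms(2) by blast
  have "neighbourhood_base_of (\<lambda>C. compactin Y C \<and> closedin Y C) Y"
    using locally_compact_regular_space_neighbourhood_base assms(2) reg by blast
  then have nbhd: "\<exists>N L. openin Y N \<and> (compactin Y L \<and> closedin Y L) \<and> y \<in> N \<and> N \<subseteq> L \<and> L \<subseteq> W"
    if "openin Y W" "y \<in> W" for W y
    using that unfolding neighbourhood_base_of by blast
  obtain N1 L1 where 1: "openin Y N1" "compactin Y L1" "x \<in> N1" "N1 \<subseteq> L1"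
    using nbhd[OF openin_topspace assms(3)] by blast
  obtain N2 L2 where 2: "openin Y N2" "compactin Y L2" "x \<in> N2" "N2 \<subseteq> L2" "L2 \<subseteq> N1"
    using nbhd[OF 1(1) 1(3)] by blast
  have "disjnt L2 (topspace Y - N1)"
    using 2(5) by (auto simp: disjnt_def)
  moreover have "closedin Y (topspace Y - N1)"
    using 1(1) by blast
  ultimately obtain f :: "_ \<Rightarrow> real" where f: "continuous_map Y (top_of_set {0..1}) f"
    "f ` (topspace Y - N1) \<subseteq> {0}" "f ` L2 \<subseteq> {1}"
    using Urysohn_completely_regular_compact_closed[OF zero_le_one \<open>completely_regular_space Y\<close> 2(2)] by metis
  define \<psi> where "\<psi> y = (if y \<in> topspace Y then f y else 0)" for y
  show ?thesis
  proof (rule that[of N2 L1 \<psi>])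
    show "continuous_map Y euclideanreal \<psi>"
      using f(1) continuous_map_in_subtopology by (fastforce simp: \<psi>_def intro: continuous_map_eq)
    show "\<psi> y = 1" if "y \<in> N2" for y
      using that 2(4) openin_subset[OF 2(1)] f(3) by (auto simp: \<psi>_def)
    show "\<psi> y = 0" if "y \<notin> L1" for y
      using that 1(4) f(2) by (auto simp: \<psi>_def)
  qed (use 1 2 in auto)
qed

lemma Cc_extension_compact_support:
  assumes "Cc_extension Y f"
  obtains V K where "openin Y V" "Hausdorff_space (subtopology Y V)"
    "continuous_map (subtopology Y V) euclidean f" "compactin Y K" "K \<subseteq> V"
    "\<And>y. y \<notin> K \<Longrightarrow> f y = 0"
  using assms unfolding Cc_extension_def compactin_subtopology by blast

lemma frakS_compact_support:
  assumes "f \<in> frakS Y"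
  obtains C where "compactin Y C" "\<And>y. y \<notin> C \<Longrightarrow> f y = 0"
proof -
  obtain n and c :: "nat \<Rightarrow> complex" and b where b: "\<And>k. k < n \<Longrightarrow> Cc_extension Y (b k)" and f: "f = (\<lambda>y. \<Sum>k<n. c k * b k y)"
    using assms unfolding frakS_def by blast
  have "\<exists>K. compactin Y K \<and> (\<forall>y. y \<notin> K \<longrightarrow> b k y = 0)" if "k < n" for k
    using Cc_extension_compact_support[OF b[OF that]] by metis
  then obtain K where K: "\<And>k. k < n \<Longrightarrow> compactin Y (K k) \<and> (\<forall>y. y \<notin> K k \<longrightarrow> b k y = 0)"
    by metis
  show ?thesis
  proof (rule that[of "\<Union>k<n. K k"])
    show "compactin Y (\<Union>k<n. K k)"
      using K by (intro compactin_Union) auto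
    show "f y = 0" if "y \<notin> (\<Union>k<n. K k)" for y
      using that K unfolding f by (auto intro!: sum.neutral)
  qed
qed

lemma frakS_zero_outside_topspace:
  assumes "f \<in> frakS Y" "y \<notin> topspace Y"
  shows "f y = 0"
  by (metis frakS_compact_support[OF assms(1)] assms(2) compactin_subset_topspace subsetD)

lemma frakS_finite_fibre_support:
  assumes "Hausdorff_space Z" "local_homeomorphism Y Z p" "f \<in> frakS Y"
  shows "finite {y \<in> topspace Y. p y = z \<and> f y \<noteq> 0}"
proof -
  obtain C where C: "compactin Y C" "\<And>y. y \<notin> C \<Longrightarrow> f y = 0"
    using frakS_compact_support assms(3) by blast
  have "continuous_map Y Z p"
    using assms(2) unfolding local_homeomorphism_def by blast
  then have "compactin Y ({y \<in> topspace Y. p y = z} \<inter> C)"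
    using closed_Int_compactin[OF closedin_fibre[OF assms(1)] C(1)] by blast
  then have "finite ({y \<in> topspace Y. p y = z} \<inter> C)"
    by (rule local_homeomorphism_compact_fibre_finite[OF assms(2)]) auto
  then show ?thesis
    by (rule finite_subset[rotated]) (use C in auto)
qed

locale etale_gpd =
  fixes G :: "'g topology" and G0 :: "'g set" and r s :: "'g \<Rightarrow> 'g"
    and m :: "'g \<Rightarrow> 'g \<Rightarrow> 'g" and i :: "'g \<Rightarrow> 'g"
  assumes etale_groupoid: "etale_groupoid G G0 r s m i"
begin

lemma
  shows units_subset: "G0 \<subseteq> topspace G"
    and range_in_units: "g \<in> topspace G \<Longrightarrow> r g \<in> G0"
    and source_in_units: "g \<in> topspace G \<Longrightarrow> s g \<in> G0"
    and inverse_in: "g \<in> topspace G \<Longrightarrow> i g \<in> topspace G"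
    and range_unit: "u \<in> G0 \<Longrightarrow> r u = u"
    and mult_in: "\<lbrakk>g \<in> topspace G; h \<in> topspace G; s g = r h\<rbrakk> \<Longrightarrow> m g h \<in> topspace G"
    and range_mult: "\<lbrakk>g \<in> topspace G; h \<in> topspace G; s g = r h\<rbrakk> \<Longrightarrow> r (m g h) = r g"
    and mult_assoc: "\<lbrakk>g \<in> topspace G; h \<in> topspace G; k \<in> topspace G; s g = r h; s h = r k\<rbrakk>
      \<Longrightarrow> m (m g h) k = m g (m h k)"
    and mult_range_left: "g \<in> topspace G \<Longrightarrow> m (r g) g = g"
    and mult_source_right: "g \<in> topspace G \<Longrightarrow> m g (s g) = g"
    and range_inverse: "g \<in> topspace G \<Longrightarrow> r (i g) = s g"
    and source_inverse: "g \<in> topspace G \<Longrightarrow> s (i g) = r g"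
    and mult_inverse_right: "g \<in> topspace G \<Longrightarrow> m g (i g) = r g"
    and mult_inverse_left: "g \<in> topspace G \<Longrightarrow> m (i g) g = s g"
    and Hausdorff_units: "Hausdorff_space (subtopology G G0)"
    and locally_compact_units: "locally_compact_space (subtopology G G0)"
    and local_homeomorphism_range: "local_homeomorphism G (subtopology G G0) r"
    and local_homeomorphism_source: "local_homeomorphism G (subtopology G G0) s"
    and continuous_inverse: "continuous_map G G i"
  using etale_groupoid unfolding etale_groupoid_def by blast+

lemma continuous_source: "continuous_map G (subtopology G G0) s"
  using local_homeomorphism_source unfolding local_homeomorphism_def by blast

lemma inverse_inverse:
  assumes g: "g \<in> topspace G"
  shows "i (i g) = g"
proof -
  have ig: "i g \<in> topspace G" and iig: "i (i g) \<in> topspace G"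
    using inverse_in g by auto
  have "i (i g) = m (i (i g)) (m (i g) g)"
    using mult_source_right[OF iig] source_inverse[OF ig] range_inverse[OF g] mult_inverse_left[OF g]
    by simp
  also have "\<dots> = m (m (i (i g)) (i g)) g"
    using mult_assoc[OF iig ig g] source_inverse range_inverse g ig by simp
  also have "\<dots> = g"
    using mult_inverse_left[OF ig] source_inverse[OF g] mult_range_left[OF g] by simp
  finally show ?thesis .
qed

lemma bij_betw_mult_left:
  assumes g: "g \<in> topspace G"
  shows "bij_betw (m g) {k \<in> topspace G. r k = s g} {k \<in> topspace G. r k = r g}"
proof (rule bij_betw_byWitness[where f' = "m (i g)"])
  have ig: "i g \<in> topspace G"
    using inverse_in g .
  show "\<forall>k\<in>{k \<in> topspace G. r k = s g}. m (i g) (m g k) = k"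
    using mult_assoc[OF ig g] mult_inverse_left[OF g] mult_range_left source_inverse g by auto
  show "\<forall>k\<in>{k \<in> topspace G. r k = r g}. m g (m (i g) k) = k"
    using mult_assoc[OF g ig] mult_inverse_right[OF g] mult_range_left source_inverse[OF g] range_inverse[OF g] g by auto
  show "m g ` {k \<in> topspace G. r k = s g} \<subseteq> {k \<in> topspace G. r k = r g}"
    using mult_in range_mult g by auto
  show "m (i g) ` {k \<in> topspace G. r k = r g} \<subseteq> {k \<in> topspace G. r k = s g}"
    using mult_in range_mult range_inverse source_inverse ig g by auto
qed

definition range_chart :: "'g set \<Rightarrow> bool" where
  "range_chart B \<longleftrightarrow> openin G B \<and> openin (subtopology G G0) (r ` B) \<and>
     homeomorphic_map (subtopology G B) (subtopology (subtopology G G0) (r ` B)) r"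

lemma range_chart_inj: "range_chart B \<Longrightarrow> inj_on r B"
  using homeomorphic_map_inv_into(2) openin_subset unfolding range_chart_def by metis

lemma range_chart_within:
  assumes k: "k \<in> topspace G" and W: "openin (subtopology G G0) W" "s k \<in> W"
  obtains B where "range_chart B" "k \<in> B" "s ` B \<subseteq> W"
proof -
  obtain B0 where B0: "openin G B0" "k \<in> B0" "openin (subtopology G G0) (r ` B0)"
    "homeomorphic_map (subtopology G B0) (subtopology (subtopology G G0) (r ` B0)) r"
    using local_homeomorphism_range k unfolding local_homeomorphism_def by blast
  define B where "B = {h \<in> B0. s h \<in> W}"
  have "B = B0 \<inter> {h \<in> topspace G. s h \<in> W}"
    using openin_subset[OF B0(1)] unfolding B_def by blast
  then have "openin G B"
    using openin_Int[OF B0(1) openin_continuous_map_preimage[OF continuous_source W(1)]] by simp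
  moreover have "B \<subseteq> B0"
    unfolding B_def by blast
  ultimately have "range_chart B"
    unfolding range_chart_def using homeomorphic_map_open_subset[OF B0(4) B0(3)] by blast
  with that B0(2) k W(2) show ?thesis
    unfolding B_def by blast
qed

lemma disjoint_range_charts:
  assumes "finite T" "T \<subseteq> topspace G" "inj_on s T"
  obtains B where "\<And>k. k \<in> T \<Longrightarrow> range_chart (B k) \<and> k \<in> B k"
    "\<And>k l. k \<in> T \<Longrightarrow> l \<in> T \<Longrightarrow> k \<noteq> l \<Longrightarrow> B k \<inter> B l = {}"
proof -
  \<comment> \<open>\<open>G\<close> need not be Hausdorff: the charts are separated through their sources in the unit space.\<close>
  have "s ` T \<subseteq> topspace (subtopology G G0)"
    using assms(2) source_in_units units_subset by auto
  then obtain W where W: "\<And>u. u \<in> s ` T \<Longrightarrow> openin (subtopology G G0) (W u) \<and> u \<in> W u"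
    "\<And>u v. u \<in> s ` T \<Longrightarrow> v \<in> s ` T \<Longrightarrow> u \<noteq> v \<Longrightarrow> W u \<inter> W v = {}"
    using Hausdorff_space_separate_finite[OF Hausdorff_units finite_imageI[OF assms(1)]] by blast
  have "\<exists>B. range_chart B \<and> k \<in> B \<and> s ` B \<subseteq> W (s k)" if "k \<in> T" for k
    using range_chart_within[of k "W (s k)"] W(1) that assms(2) by blast
  then obtain B where B: "\<And>k. k \<in> T \<Longrightarrow> range_chart (B k) \<and> k \<in> B k \<and> s ` B k \<subseteq> W (s k)"
    by metis
  show ?thesis
  proof (rule that)
    show "range_chart (B k) \<and> k \<in> B k" if "k \<in> T" for k
      using B that by blast
    show "B k \<inter> B l = {}" if "k \<in> T" "l \<in> T" "k \<noteq> l" for k l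
    proof -
      have "W (s k) \<inter> W (s l) = {}"
        using W(2) that assms(3) by (simp add: inj_on_eq_iff)
      then show ?thesis
        using B[OF that(1)] B[OF that(2)] by blast
    qed
  qed
qed

end

section \<open>Free and proper actions with etale anchor\<close>

locale free_proper_action = etale_gpd G G0 r s m i
  for G :: "'g topology" and G0 r s m i +
  fixes X :: "'x topology" and sX :: "'x \<Rightarrow> 'g" and act :: "'x \<Rightarrow> 'g \<Rightarrow> 'x"
  assumes local_homeomorphism_anchor: "local_homeomorphism X (subtopology G G0) sX"
    and act_in: "\<lbrakk>x \<in> topspace X; g \<in> topspace G; sX x = r g\<rbrakk> \<Longrightarrow> act x g \<in> topspace X"
    and anchor_act: "\<lbrakk>x \<in> topspace X; g \<in> topspace G; sX x = r g\<rbrakk> \<Longrightarrow> sX (act x g) = s g"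
    and act_mult: "\<lbrakk>x \<in> topspace X; g \<in> topspace G; h \<in> topspace G; sX x = r g; s g = r h\<rbrakk>
      \<Longrightarrow> act x (m g h) = act (act x g) h"
    and act_anchor: "x \<in> topspace X \<Longrightarrow> act x (sX x) = x"
    and continuous_act: "continuous_map (subtopology (prod_topology X G)
      {(x, g). x \<in> topspace X \<and> g \<in> topspace G \<and> sX x = r g}) X (\<lambda>(x, g). act x g)"
    and act_free: "\<lbrakk>x \<in> topspace X; g \<in> topspace G; sX x = r g; act x g = x\<rbrakk> \<Longrightarrow> g = sX x"
    and act_proper: "proper_map (subtopology (prod_topology X G)
      {(x, g). x \<in> topspace X \<and> g \<in> topspace G \<and> sX x = r g}) (prod_topology X X) (\<lambda>(x, g). (x, act x g))"

lemma groupoid_correspondence_free_proper_action: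
  assumes "groupoid_correspondence H H0 rH sH mH iH X rX actL sX actR G G0 rG sG mG iG"
  shows "free_proper_action G G0 rG sG mG iG X sX actR"
  using assms unfolding groupoid_correspondence_def free_proper_action_def
    free_proper_action_axioms_def etale_gpd_def
  by (intro conjI allI impI) simp_all

context free_proper_action
begin

abbreviation composable :: "('x \<times> 'g) set" where
  "composable \<equiv> {(x, g). x \<in> topspace X \<and> g \<in> topspace G \<and> sX x = r g}"

lemma continuous_anchor: "continuous_map X (subtopology G G0) sX"
  using local_homeomorphism_anchor unfolding local_homeomorphism_def by blast

lemma anchor_in_units: "x \<in> topspace X \<Longrightarrow> sX x \<in> G0"
  using continuous_map_funspace[OF continuous_anchor] by auto

lemma act_inverse:
  assumes "x \<in> topspace X" "g \<in> topspace G" "sX x = r g"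
  shows "act (act x g) (i g) = x"
proof -
  have "act (act x g) (i g) = act x (m g (i g))"
    using act_mult[OF assms(1,2) inverse_in[OF assms(2)] assms(3)] range_inverse assms by simp
  also have "\<dots> = x"
    using mult_inverse_right act_anchor assms by metis
  finally show ?thesis .
qed

lemma act_left_cancel:
  assumes x: "x \<in> topspace X" and g: "g \<in> topspace G" "sX x = r g" and h: "h \<in> topspace G" "sX x = r h"
    and eq: "act x g = act x h"
  shows "g = h"
proof -
  have sgh: "s g = s h"
    using anchor_act x g h eq by metis
  have ig: "i g \<in> topspace G"
    using inverse_in g(1) .
  have "act x (m h (i g)) = act (act x g) (i g)"
    using act_mult[OF x h(1) ig h(2)] range_inverse g sgh eq by simp
  also have "\<dots> = x"
    using act_inverse x g by blast
  finally have "m h (i g) = sX x"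
    using act_free[OF x mult_in[OF h(1) ig]] range_mult[OF h(1) ig] range_inverse g sgh h(2) by simp
  then have "m (m h (i g)) g = g"
    using g mult_range_left by simp
  moreover have "m (m h (i g)) g = h"
    using mult_assoc[OF h(1) ig g(1)] range_inverse source_inverse mult_inverse_left g sgh
      mult_source_right[OF h(1)] by simp
  ultimately show ?thesis by simp
qed

definition transporters :: "'x set \<Rightarrow> 'x set \<Rightarrow> 'g set" where
  "transporters K L = {g \<in> topspace G. \<exists>x\<in>K. x \<in> topspace X \<and> sX x = r g \<and> act x g \<in> L}"

lemma compactin_transporters:
  assumes "compactin X K" "compactin X L"
  shows "compactin G (transporters K L)"
proof -
  let ?D = "subtopology (prod_topology X G) composable"
  have "compactin ?D {z \<in> topspace ?D. (\<lambda>(x, g). (x, act x g)) z \<in> K \<times> L}"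
    using act_proper compactin_Times assms unfolding proper_map_alt by blast
  then have "compactin G (snd ` {z \<in> topspace ?D. (\<lambda>(x, g). (x, act x g)) z \<in> K \<times> L})"
    using image_compactin continuous_map_from_subtopology[OF continuous_map_snd] by blast
  moreover have "snd ` {z \<in> topspace ?D. (\<lambda>(x, g). (x, act x g)) z \<in> K \<times> L} = transporters K L"
    unfolding transporters_def using compactin_subset_topspace[OF assms(1)] by (auto simp: image_iff)
  ultimately show ?thesis by simp
qed

lemma finite_transporters:
  assumes "x \<in> topspace X" "compactin X L"
  shows "finite (transporters {x} L)"
proof -
  have "compactin G (transporters {x} L)"
    using compactin_transporters assms by simp
  then show ?thesis
    by (rule local_homeomorphism_compact_fibre_finite[OF local_homeomorphism_range, where z = "sX x"])
      (auto simp: transporters_def)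
qed

lemma transporters_tube:
  assumes x0: "x0 \<in> topspace X" and L: "compactin X L"
    and W: "openin G W" "transporters {x0} L \<subseteq> W"
  obtains N where "openin X N" "x0 \<in> N" "transporters N L \<subseteq> W"
proof -
  let ?D = "subtopology (prod_topology X G) composable"
  let ?\<Phi> = "\<lambda>(x, g). (x, act x g)"
  have "openin ?D {z \<in> topspace ?D. snd z \<in> W}"
    using openin_continuous_map_preimage[OF continuous_map_from_subtopology[OF continuous_map_snd] W(1)] .
  then have "closedin ?D (topspace ?D - {z \<in> topspace ?D. snd z \<in> W})"
    by blast
  then have "closedin (prod_topology X X) (?\<Phi> ` (topspace ?D - {z \<in> topspace ?D. snd z \<in> W}))"
    using act_proper unfolding proper_map_def closed_map_def by blast
  then have C: "openin (prod_topology X X) (topspace (prod_topology X X) - ?\<Phi> ` (topspace ?D - {z \<in> topspace ?D. snd z \<in> W}))"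
    (is "openin _ ?C") by blast
  have "{x0} \<times> L \<subseteq> ?C"
    using W(2) x0 compactin_subset_topspace[OF L] by (fastforce simp: transporters_def)
  then obtain N V where NV: "openin X N" "x0 \<in> N" "L \<subseteq> V" "N \<times> V \<subseteq> ?C"
    using tube_lemma_right[OF C L x0] by blast
  have "g \<in> W" if "g \<in> transporters N L" for g
    using that NV(3,4) openin_subset[OF NV(1)] unfolding transporters_def by fastforce
  with NV that show ?thesis by blast
qed

lemma continuous_act_range_chart:
  assumes "range_chart B"
  defines "M \<equiv> {x \<in> topspace X. sX x \<in> r ` B}"
  shows "openin X M"
    and "continuous_map (subtopology X M) G (\<lambda>x. inv_into B r (sX x))"
    and "continuous_map (subtopology X M) X (\<lambda>x. act x (inv_into B r (sX x)))"
proof -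
  have B: "openin G B" "openin (subtopology G G0) (r ` B)"
    "homeomorphic_map (subtopology G B) (subtopology (subtopology G G0) (r ` B)) r"
    using assms(1) unfolding range_chart_def by auto
  have inv: "continuous_map (subtopology (subtopology G G0) (r ` B)) (subtopology G B) (inv_into B r)"
    using homeomorphic_map_inv_into(1)[OF B(3) openin_subset[OF B(1)]] .
  show "openin X M"
    unfolding M_def by (rule openin_continuous_map_preimage[OF continuous_anchor B(2)])
  have "continuous_map (subtopology X M) (subtopology (subtopology G G0) (r ` B)) sX"
    by (rule continuous_map_into_subtopology[OF continuous_map_from_subtopology[OF continuous_anchor]])
      (auto simp: M_def)
  then have "continuous_map (subtopology X M) (subtopology G B) (\<lambda>x. inv_into B r (sX x))"
    using continuous_map_compose[OF _ inv] unfolding o_def by blast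
  then show sect: "continuous_map (subtopology X M) G (\<lambda>x. inv_into B r (sX x))"
    using continuous_map_in_subtopology by blast
  have "inv_into B r (sX x) \<in> topspace G \<and> r (inv_into B r (sX x)) = sX x" if "x \<in> M" for x
    using that openin_subset[OF B(1)] unfolding M_def by (auto simp: inv_into_into f_inv_into_f)
  then have "continuous_map (subtopology X M) (subtopology (prod_topology X G) composable)
      (\<lambda>x. (x, inv_into B r (sX x)))"
    by (intro continuous_map_into_subtopology continuous_map_pairedI sect
        continuous_map_from_subtopology[OF continuous_map_id[unfolded id_def]]) (auto simp: M_def)
  from continuous_map_compose[OF this continuous_act]
  show "continuous_map (subtopology X M) X (\<lambda>x. act x (inv_into B r (sX x)))"
    by (simp add: o_def)
qed

lemma transporters_in_disjoint_charts:
  assumes x0: "x0 \<in> topspace X" and L: "compactin X L" and inj: "inj_on s (transporters {x0} L)"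
  defines "T \<equiv> transporters {x0} L"
  obtains N B where "openin X N" "x0 \<in> N"
    "\<And>k. k \<in> T \<Longrightarrow> range_chart (B k) \<and> k \<in> B k \<and> N \<subseteq> {x \<in> topspace X. sX x \<in> r ` B k}"
    "\<And>k l. \<lbrakk>k \<in> T; l \<in> T; k \<noteq> l\<rbrakk> \<Longrightarrow> B k \<inter> B l = {}"
    "transporters N L \<subseteq> (\<Union>k\<in>T. B k)"
proof -
  have T: "finite T" "T \<subseteq> topspace G"
    using finite_transporters[OF x0 L] unfolding T_def transporters_def by auto
  obtain B where B: "\<And>k. k \<in> T \<Longrightarrow> range_chart (B k) \<and> k \<in> B k"
    "\<And>k l. k \<in> T \<Longrightarrow> l \<in> T \<Longrightarrow> k \<noteq> l \<Longrightarrow> B k \<inter> B l = {}"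
    using disjoint_range_charts[OF T] inj unfolding T_def by blast
  obtain N0 where N0: "openin X N0" "x0 \<in> N0" "transporters N0 L \<subseteq> (\<Union>k\<in>T. B k)"
    using transporters_tube[OF x0 L, of "\<Union>k\<in>T. B k"] B(1) unfolding T_def range_chart_def by blast
  define N where "N = N0 \<inter> (\<Inter>k\<in>T. {x \<in> topspace X. sX x \<in> r ` B k})"
  show ?thesis
  proof (rule that[of N B])
    show "openin X N"
      unfolding N_def using N0(1) T(1) continuous_act_range_chart(1) B(1) by (auto intro: openin_Int_Inter)
    show "x0 \<in> N"
      using N0(2) x0 B(1) unfolding N_def T_def transporters_def by (auto intro: image_eqI)
    show "transporters N L \<subseteq> (\<Union>k\<in>T. B k)"
      using N0(3) unfolding N_def transporters_def by blast
  qed (use B in \<open>auto simp: N_def\<close>)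
qed

lemma transporters_local_sections:
  assumes x0: "x0 \<in> topspace X" and L: "compactin X L" and inj: "inj_on s (transporters {x0} L)"
  defines "T \<equiv> transporters {x0} L"
  obtains N \<kappa> where "openin X N" "x0 \<in> N" "\<And>k. k \<in> T \<Longrightarrow> \<kappa> k x0 = k"
    "\<And>k x. \<lbrakk>k \<in> T; x \<in> N\<rbrakk> \<Longrightarrow> \<kappa> k x \<in> topspace G \<and> r (\<kappa> k x) = sX x"
    "\<And>k. k \<in> T \<Longrightarrow> continuous_map (subtopology X N) X (\<lambda>x. act x (\<kappa> k x))"
    "\<And>x. x \<in> N \<Longrightarrow> inj_on (\<lambda>k. \<kappa> k x) T"
    "\<And>x. x \<in> N \<Longrightarrow> transporters {x} L \<subseteq> (\<lambda>k. \<kappa> k x) ` T"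
proof -
  obtain N B where N: "openin X N" "x0 \<in> N"
    and B: "\<And>k. k \<in> T \<Longrightarrow> range_chart (B k) \<and> k \<in> B k \<and> N \<subseteq> {x \<in> topspace X. sX x \<in> r ` B k}"
      "\<And>k l. \<lbrakk>k \<in> T; l \<in> T; k \<noteq> l\<rbrakk> \<Longrightarrow> B k \<inter> B l = {}"
    and cover: "transporters N L \<subseteq> (\<Union>k\<in>T. B k)"
    using transporters_in_disjoint_charts[OF x0 L inj] unfolding T_def by blast
  define \<kappa> where "\<kappa> k x = inv_into (B k) r (sX x)" for k x
  have in_chart: "\<kappa> k x \<in> B k" "r (\<kappa> k x) = sX x" if "k \<in> T" "x \<in> N" for k x
    using B(1)[OF that(1)] that(2) unfolding \<kappa>_def by (auto intro: inv_into_into f_inv_into_f)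
  have section_eq: "\<kappa> k x = h" if "k \<in> T" "h \<in> B k" "r h = sX x" for k h x
    using that B(1) range_chart_inj unfolding \<kappa>_def by (metis inv_into_f_f)
  show ?thesis
  proof (rule that[of N \<kappa>])
    show "\<kappa> k x0 = k" if "k \<in> T" for k
      using section_eq[OF that] B(1)[OF that] that unfolding T_def transporters_def by auto
    show "\<kappa> k x \<in> topspace G \<and> r (\<kappa> k x) = sX x" if "k \<in> T" "x \<in> N" for k x
      using in_chart[OF that] B(1)[OF that(1)] openin_subset unfolding range_chart_def by blast
    show "continuous_map (subtopology X N) X (\<lambda>x. act x (\<kappa> k x))" if "k \<in> T" for k
      using continuous_map_from_subtopology_mono[OF continuous_act_range_chart(3)] B(1)[OF that]
      unfolding \<kappa>_def by blast
    show "inj_on (\<lambda>k. \<kappa> k x) T" if "x \<in> N" for x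
      using in_chart(1)[OF _ that] B(2) by (intro inj_onI) (metis disjoint_iff)
    show "transporters {x} L \<subseteq> (\<lambda>k. \<kappa> k x) ` T" if x: "x \<in> N" for x
    proof
      fix g assume g: "g \<in> transporters {x} L"
      then obtain k where k: "k \<in> T" "g \<in> B k"
        using x cover unfolding transporters_def by blast
      moreover have "r g = sX x"
        using g unfolding transporters_def by simp
      ultimately show "g \<in> (\<lambda>k. \<kappa> k x) ` T"
        using section_eq by force
    qed
  qed (use N in auto)
qed

definition orbit_sum :: "('x \<Rightarrow> real) \<Rightarrow> 'x \<Rightarrow> real" where
  "orbit_sum f x = (\<Sum>\<^sub>\<infinity>g\<in>{g \<in> topspace G. r g = sX x}. f (act x g))"

lemma orbit_sum_act:
  assumes "x \<in> topspace X" "g \<in> topspace G" "sX x = r g"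
  shows "orbit_sum f (act x g) = orbit_sum f x"
proof -
  have "orbit_sum f x = (\<Sum>\<^sub>\<infinity>k\<in>{k \<in> topspace G. r k = s g}. f (act x (m g k)))"
    unfolding orbit_sum_def assms(3)
    using infsum_reindex_bij_betw[OF bij_betw_mult_left[OF assms(2)], of "\<lambda>k. f (act x k)"] by simp
  also have "\<dots> = orbit_sum f (act x g)"
    unfolding orbit_sum_def anchor_act[OF assms] using act_mult assms by (intro infsum_cong) auto
  finally show ?thesis by simp
qed

lemma orbit_sum_mult_invariant:
  assumes c: "\<And>x g. \<lbrakk>x \<in> topspace X; g \<in> topspace G; sX x = r g\<rbrakk> \<Longrightarrow> c (act x g) = c x"
    and x: "x \<in> topspace X"
  shows "orbit_sum (\<lambda>y. f y * c y) x = orbit_sum f x * c x"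
proof -
  have "orbit_sum (\<lambda>y. f y * c y) x = (\<Sum>\<^sub>\<infinity>g\<in>{g \<in> topspace G. r g = sX x}. f (act x g) * c x)"
    unfolding orbit_sum_def using c x by (intro infsum_cong) auto
  then show ?thesis
    unfolding orbit_sum_def by (simp add: infsum_cmult_left')
qed

lemma corr_inner_eq_sum:
  assumes "\<xi> \<in> frakS X" "g \<in> topspace G"
  shows "corr_inner X sX act G r \<xi> \<eta> g = (\<Sum>x\<in>{x \<in> topspace X. sX x = r g \<and> \<xi> x \<noteq> 0}. cnj (\<xi> x) * \<eta> (act x g))"
  unfolding corr_inner_def using assms(2)
  by (simp, intro infsum_eq_sum_superset
      frakS_finite_fibre_support[OF Hausdorff_units local_homeomorphism_anchor assms(1)]) auto

end

section \<open>Bump functions on slices\<close>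

locale slice_bump = free_proper_action G G0 r s m i X sX act
  for G :: "'g topology" and G0 r s m i and X :: "'x topology" and sX act +
  fixes U L :: "'x set" and \<psi> :: "'x \<Rightarrow> real"
  assumes open_slice: "openin X U"
    and homeomorphic_slice: "homeomorphic_map (subtopology X U) (subtopology (subtopology G G0) (sX ` U)) sX"
    and open_anchor_slice: "openin (subtopology G G0) (sX ` U)"
    and compact_support: "compactin X L"
    and support_in_slice: "L \<subseteq> U"
    and continuous_bump: "continuous_map (subtopology X U) euclideanreal \<psi>"
    and bump_vanishes: "\<And>y. y \<notin> L \<Longrightarrow> \<psi> y = 0"
begin

lemma bump_support: "\<psi> y \<noteq> 0 \<Longrightarrow> y \<in> L"
  using bump_vanishes by blast

lemma slice_subset: "U \<subseteq> topspace X"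
  using openin_subset[OF open_slice] .

lemma inj_on_anchor_slice: "inj_on sX U"
  using homeomorphic_map_inv_into(2)[OF homeomorphic_slice slice_subset] .

lemma Hausdorff_slice: "Hausdorff_space (subtopology X U)"
  using homeomorphic_Hausdorff_space[OF homeomorphic_map_imp_homeomorphic_space[OF homeomorphic_slice]]
    Hausdorff_space_subtopology[OF Hausdorff_units] by blast

lemma orbit_sum_eq_sum:
  assumes "x \<in> topspace X"
  shows "orbit_sum (\<lambda>y. (\<psi> y)\<^sup>2) x = (\<Sum>g\<in>transporters {x} L. (\<psi> (act x g))\<^sup>2)"
  unfolding orbit_sum_def
  by (rule infsum_eq_sum_superset[OF finite_transporters[OF assms compact_support]])
    (use assms in \<open>auto simp: transporters_def bump_vanishes\<close>)

lemma orbit_sum_nonneg: "x \<in> topspace X \<Longrightarrow> 0 \<le> orbit_sum (\<lambda>y. (\<psi> y)\<^sup>2) x"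
  by (simp add: orbit_sum_eq_sum sum_nonneg)

lemma sq_le_orbit_sum:
  assumes x: "x \<in> topspace X"
  shows "(\<psi> x)\<^sup>2 \<le> orbit_sum (\<lambda>y. (\<psi> y)\<^sup>2) x"
proof (cases "x \<in> L")
  case True
  have "sX x \<in> transporters {x} L"
    using x True act_anchor anchor_in_units units_subset range_unit
    unfolding transporters_def by auto
  then have "(\<psi> (act x (sX x)))\<^sup>2 \<le> (\<Sum>g\<in>transporters {x} L. (\<psi> (act x g))\<^sup>2)"
    by (rule member_le_sum) (use finite_transporters[OF x compact_support] in auto)
  then show ?thesis
    using orbit_sum_eq_sum[OF x] act_anchor[OF x] by simp
next
  case False
  then show ?thesis
    using bump_vanishes orbit_sum_nonneg x by simp
qed

lemma inj_on_source_transporters: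
  assumes x: "x \<in> topspace X"
  shows "inj_on s (transporters {x} U)"
proof (rule inj_onI)
  fix g h assume g: "g \<in> transporters {x} U" and h: "h \<in> transporters {x} U" and "s g = s h"
  then have "sX (act x g) = sX (act x h)"
    using anchor_act x unfolding transporters_def by auto
  then have "act x g = act x h"
    using inj_on_anchor_slice g h unfolding transporters_def inj_on_def by auto
  then show "g = h"
    using act_left_cancel x g h unfolding transporters_def by auto
qed

lemma orbit_sum_eq_sum_sections:
  assumes x: "x \<in> topspace X" and T: "finite T" "inj_on \<kappa> T"
    and \<kappa>: "\<And>k. k \<in> T \<Longrightarrow> \<kappa> k \<in> topspace G \<and> r (\<kappa> k) = sX x"
    and cover: "transporters {x} L \<subseteq> \<kappa> ` T"
  shows "orbit_sum (\<lambda>y. (\<psi> y)\<^sup>2) x = (\<Sum>k\<in>T. (\<psi> (act x (\<kappa> k)))\<^sup>2)"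
proof -
  have "(\<Sum>k\<in>T. (\<psi> (act x (\<kappa> k)))\<^sup>2) = (\<Sum>g\<in>\<kappa> ` T. (\<psi> (act x g))\<^sup>2)"
    using sum.reindex[OF T(2), of "\<lambda>g. (\<psi> (act x g))\<^sup>2"] by simp
  also have "\<dots> = (\<Sum>g\<in>transporters {x} L. (\<psi> (act x g))\<^sup>2)"
    by (rule sum.mono_neutral_right)
      (use T(1) cover \<kappa> x in \<open>auto simp: transporters_def intro: bump_support\<close>)
  finally show ?thesis
    using orbit_sum_eq_sum[OF x] by simp
qed

lemma continuous_bump_through:
  assumes N: "openin X N" and f: "continuous_map (subtopology X N) X f"
  shows "openin X {x \<in> N. f x \<in> U}"
    and "continuous_map (subtopology X {x \<in> N. f x \<in> U}) euclideanreal (\<lambda>x. \<psi> (f x))"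
proof -
  have "{x \<in> topspace (subtopology X N). f x \<in> U} = {x \<in> N. f x \<in> U}"
    using openin_subset[OF N] by auto
  then show "openin X {x \<in> N. f x \<in> U}"
    using openin_continuous_map_preimage[OF f open_slice] openin_trans_full N by metis
  have "continuous_map (subtopology X {x \<in> N. f x \<in> U}) (subtopology X U) f"
    using continuous_map_from_subtopology_mono[OF f]
    by (intro continuous_map_into_subtopology) auto
  from continuous_map_compose[OF this continuous_bump]
  show "continuous_map (subtopology X {x \<in> N. f x \<in> U}) euclideanreal (\<lambda>x. \<psi> (f x))"
    by (simp add: o_def)
qed

lemma orbit_sum_locally_continuous:
  assumes x0: "x0 \<in> topspace X"
  obtains N where "openin X N" "x0 \<in> N"
    "continuous_map (subtopology X N) euclideanreal (orbit_sum (\<lambda>y. (\<psi> y)\<^sup>2))"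
proof -
  define T where "T = transporters {x0} L"
  have T: "finite T" "T \<subseteq> transporters {x0} U"
    using finite_transporters[OF x0 compact_support] support_in_slice
    unfolding T_def transporters_def by auto
  then have "inj_on s T"
    using inj_on_subset[OF inj_on_source_transporters[OF x0]] by blast
  then obtain N0 \<kappa> where N0: "openin X N0" "x0 \<in> N0" "\<And>k. k \<in> T \<Longrightarrow> \<kappa> k x0 = k"
    "\<And>k x. \<lbrakk>k \<in> T; x \<in> N0\<rbrakk> \<Longrightarrow> \<kappa> k x \<in> topspace G \<and> r (\<kappa> k x) = sX x"
    "\<And>k. k \<in> T \<Longrightarrow> continuous_map (subtopology X N0) X (\<lambda>x. act x (\<kappa> k x))"
    "\<And>x. x \<in> N0 \<Longrightarrow> inj_on (\<lambda>k. \<kappa> k x) T"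
    "\<And>x. x \<in> N0 \<Longrightarrow> transporters {x} L \<subseteq> (\<lambda>k. \<kappa> k x) ` T"
    using transporters_local_sections[OF x0 compact_support] unfolding T_def by blast
  \<comment> \<open>\<open>\<psi>\<close> is only continuous on the slice, so each section is cut down to the points it moves into \<open>U\<close>.\<close>
  define M where "M k = {x \<in> N0. act x (\<kappa> k x) \<in> U}" for k
  have M: "openin X (M k)" "continuous_map (subtopology X (M k)) euclideanreal (\<lambda>x. \<psi> (act x (\<kappa> k x)))"
    if "k \<in> T" for k
    unfolding M_def using continuous_bump_through[OF N0(1) N0(5)[OF that]] by auto
  have x0M: "x0 \<in> M k" if "k \<in> T" for k
    using N0(2) N0(3)[OF that] x0 that T(2) unfolding M_def transporters_def by auto
  define N where "N = N0 \<inter> \<Inter>(M ` T)"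
  have N: "openin X N" "x0 \<in> N" "N \<subseteq> N0" "\<And>k. k \<in> T \<Longrightarrow> N \<subseteq> M k"
    unfolding N_def using N0(1,2) x0M M(1) T(1) by (auto intro: openin_Int_Inter)
  have eq: "orbit_sum (\<lambda>y. (\<psi> y)\<^sup>2) x = (\<Sum>k\<in>T. (\<psi> (act x (\<kappa> k x)))\<^sup>2)" if x: "x \<in> N" for x
    using orbit_sum_eq_sum_sections[OF _ T(1) N0(6) _ N0(7)] N0(1,4) x N(3) openin_subset by blast
  have "continuous_map (subtopology X N) euclideanreal (\<lambda>x. \<Sum>k\<in>T. (\<psi> (act x (\<kappa> k x)))\<^sup>2)"
  proof (intro continuous_map_sum continuous_map_real_pow T(1))
    fix k assume k: "k \<in> T"
    show "continuous_map (subtopology X N) euclideanreal (\<lambda>x. \<psi> (act x (\<kappa> k x)))"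
      using continuous_map_from_subtopology_mono[OF M(2)[OF k] N(4)[OF k]] .
  qed
  then have "continuous_map (subtopology X N) euclideanreal (orbit_sum (\<lambda>y. (\<psi> y)\<^sup>2))"
    by (rule continuous_map_eq) (use eq in auto)
  with N that show ?thesis by blast
qed

lemma continuous_orbit_sum: "continuous_map X euclideanreal (orbit_sum (\<lambda>y. (\<psi> y)\<^sup>2))"
proof (rule continuous_map_if_locally)
  fix x assume "x \<in> topspace X"
  then obtain N where "openin X N" "x \<in> N"
    "continuous_map (subtopology X N) euclideanreal (orbit_sum (\<lambda>y. (\<psi> y)\<^sup>2))"
    by (rule orbit_sum_locally_continuous)
  then show "\<exists>W. openin X W \<and> x \<in> W \<and> continuous_map (subtopology X W) euclideanreal (orbit_sum (\<lambda>y. (\<psi> y)\<^sup>2))"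
    by blast
qed

definition \<sigma> :: "'g \<Rightarrow> 'x" where
  "\<sigma> = inv_into U sX"

definition \<theta> :: "'g \<Rightarrow> 'x" where
  "\<theta> h = act (\<sigma> (s h)) (i h)"

lemma section_in_slice: "u \<in> sX ` U \<Longrightarrow> \<sigma> u \<in> U"
  unfolding \<sigma>_def by (rule inv_into_into)

lemma anchor_section: "u \<in> sX ` U \<Longrightarrow> sX (\<sigma> u) = u"
  unfolding \<sigma>_def by (rule f_inv_into_f)

lemma section_anchor: "y \<in> U \<Longrightarrow> \<sigma> (sX y) = y"
  unfolding \<sigma>_def using inj_on_anchor_slice by simp

lemma continuous_section: "continuous_map (subtopology G (sX ` U)) (subtopology X U) \<sigma>"
proof -
  have "G0 \<inter> sX ` U = sX ` U"
    using anchor_in_units slice_subset by blast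
  then have "subtopology (subtopology G G0) (sX ` U) = subtopology G (sX ` U)"
    by (simp add: subtopology_subtopology)
  then show ?thesis
    using homeomorphic_map_inv_into(1)[OF homeomorphic_slice slice_subset] unfolding \<sigma>_def by simp
qed

lemma
  assumes "h \<in> topspace G" "s h \<in> sX ` U"
  shows \<theta>_in: "\<theta> h \<in> topspace X" and anchor_\<theta>: "sX (\<theta> h) = r h"
    and act_\<theta>: "act (\<theta> h) h = \<sigma> (s h)"
proof -
  have \<sigma>: "\<sigma> (s h) \<in> topspace X" "sX (\<sigma> (s h)) = r (i h)"
    using section_in_slice slice_subset anchor_section range_inverse assms by auto
  show "\<theta> h \<in> topspace X" "sX (\<theta> h) = r h"
    unfolding \<theta>_def using act_in anchor_act \<sigma> inverse_in source_inverse assms(1) by auto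
  show "act (\<theta> h) h = \<sigma> (s h)"
    unfolding \<theta>_def using act_inverse[OF \<sigma>(1) inverse_in \<sigma>(2)] inverse_inverse assms(1) by simp
qed

lemma \<theta>_unique:
  assumes "x \<in> topspace X" "h \<in> topspace G" "sX x = r h" "act x h \<in> U"
  shows "s h \<in> sX ` U" and "x = \<theta> h"
proof -
  have e: "sX (act x h) = s h"
    using anchor_act assms(1-3) by blast
  show "s h \<in> sX ` U"
    using image_eqI[where f = sX, OF e[symmetric] assms(4)] .
  have "\<sigma> (s h) = act x h"
    using section_anchor[OF assms(4)] e by simp
  then show "x = \<theta> h"
    unfolding \<theta>_def using act_inverse[OF assms(1-3)] by simp
qed

lemma bump_act_nonzero:
  assumes "x \<in> topspace X" "h \<in> topspace G" "sX x = r h" "\<psi> (act x h) \<noteq> 0"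
  shows "s h \<in> sX ` U" and "x = \<theta> h"
  using \<theta>_unique assms bump_support support_in_slice by blast+

lemma corr_inner_bump:
  "corr_inner X sX act G r \<xi> (\<lambda>y. of_real (\<psi> y)) h =
     (if h \<in> topspace G \<and> s h \<in> sX ` U then cnj (\<xi> (\<theta> h)) * of_real (\<psi> (\<sigma> (s h))) else 0)"
proof (cases "h \<in> topspace G")
  case True
  let ?B = "{x. s h \<in> sX ` U \<and> x = \<theta> h}"
  have "(\<Sum>\<^sub>\<infinity>x\<in>{x \<in> topspace X. sX x = r h}. cnj (\<xi> x) * of_real (\<psi> (act x h)))
      = (\<Sum>x\<in>?B. cnj (\<xi> x) * of_real (\<psi> (act x h)))"
  proof (rule infsum_eq_sum_superset)
    show "finite ?B"
      by (rule finite_subset[of _ "{\<theta> h}"]) auto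
    show "?B \<subseteq> {x \<in> topspace X. sX x = r h}"
      using \<theta>_in[OF True] anchor_\<theta>[OF True] by auto
    show "cnj (\<xi> x) * of_real (\<psi> (act x h)) = 0" if "x \<in> {x \<in> topspace X. sX x = r h} - ?B" for x
      using that bump_act_nonzero[OF _ True] by auto
  qed
  also have "\<dots> = (if s h \<in> sX ` U then cnj (\<xi> (\<theta> h)) * of_real (\<psi> (\<sigma> (s h))) else 0)"
    using act_\<theta>[OF True] by auto
  finally show ?thesis
    unfolding corr_inner_def using True by simp
qed (simp add: corr_inner_def)

lemma continuous_\<theta>:
  defines "W \<equiv> {h \<in> topspace G. s h \<in> sX ` U}"
  shows "openin G W"
    and "continuous_map (subtopology G W) (subtopology X U) (\<lambda>h. \<sigma> (s h))"
    and "continuous_map (subtopology G W) X \<theta>"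
proof -
  show "openin G W"
    unfolding W_def using openin_continuous_map_preimage[OF continuous_source open_anchor_slice] .
  have "continuous_map G G s"
    using continuous_source continuous_map_in_subtopology by blast
  then have "continuous_map (subtopology G W) (subtopology G (sX ` U)) s"
    by (intro continuous_map_into_subtopology continuous_map_from_subtopology) (auto simp: W_def)
  from continuous_map_compose[OF this continuous_section]
  show \<sigma>: "continuous_map (subtopology G W) (subtopology X U) (\<lambda>h. \<sigma> (s h))"
    by (simp add: o_def)
  have "\<sigma> (s h) \<in> topspace X \<and> i h \<in> topspace G \<and> sX (\<sigma> (s h)) = r (i h)" if "h \<in> W" for h
    using that section_in_slice slice_subset anchor_section inverse_in range_inverse unfolding W_def by auto
  moreover have "continuous_map (subtopology G W) X (\<lambda>h. \<sigma> (s h))"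
    using \<sigma> continuous_map_in_subtopology by blast
  ultimately have "continuous_map (subtopology G W) (subtopology (prod_topology X G) composable) (\<lambda>h. (\<sigma> (s h), i h))"
    using continuous_map_from_subtopology[OF continuous_inverse]
    by (intro continuous_map_into_subtopology continuous_map_pairedI) auto
  from continuous_map_compose[OF this continuous_act]
  show "continuous_map (subtopology G W) X \<theta>"
    by (simp add: o_def \<theta>_def[abs_def])
qed

lemma Hausdorff_\<theta>_preimage:
  assumes "Hausdorff_space (subtopology X V)"
  shows "Hausdorff_space (subtopology G {h \<in> topspace G. s h \<in> sX ` U \<and> \<theta> h \<in> V})"
    (is "Hausdorff_space (subtopology G ?W)")
proof (rule Hausdorff_space_injective_preimage)
  \<comment> \<open>By freeness an arrow \<open>h\<close> is determined by the two points \<open>\<theta> h\<close> and \<open>act (\<theta> h) h\<close>.\<close>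
  show "Hausdorff_space (prod_topology (subtopology X V) (subtopology X U))"
    using assms Hausdorff_slice Hausdorff_space_prod_topology by blast
  have W: "?W \<subseteq> {h \<in> topspace G. s h \<in> sX ` U}"
    by blast
  have "continuous_map (subtopology G ?W) (subtopology X V) \<theta>"
    by (rule continuous_map_into_subtopology[OF continuous_map_from_subtopology_mono[OF continuous_\<theta>(3) W]])
      auto
  then show "continuous_map (subtopology G ?W) (prod_topology (subtopology X V) (subtopology X U)) (\<lambda>h. (\<theta> h, \<sigma> (s h)))"
    using continuous_map_from_subtopology_mono[OF continuous_\<theta>(2) W] by (rule continuous_map_pairedI)
  show "inj_on (\<lambda>h. (\<theta> h, \<sigma> (s h))) (topspace (subtopology G ?W))"
  proof (rule inj_onI)
    fix g h assume g: "g \<in> topspace (subtopology G ?W)" and h: "h \<in> topspace (subtopology G ?W)"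
      and eq: "(\<theta> g, \<sigma> (s g)) = (\<theta> h, \<sigma> (s h))"
    have g': "g \<in> topspace G" "s g \<in> sX ` U" and h': "h \<in> topspace G" "s h \<in> sX ` U"
      using g h by auto
    have "act (\<theta> g) g = \<sigma> (s g)"
      using act_\<theta>[OF g'] .
    also have "\<dots> = act (\<theta> h) h"
      using act_\<theta>[OF h'] eq by simp
    finally have "act (\<theta> g) g = act (\<theta> g) h"
      using eq by simp
    moreover have "sX (\<theta> g) = r g" "sX (\<theta> g) = r h"
      using anchor_\<theta>[OF g'] anchor_\<theta>[OF h'] eq by auto
    ultimately show "g = h"
      using act_left_cancel[OF \<theta>_in[OF g'] g'(1) _ h'(1)] by simp
  qed
qed

lemma transporters_\<theta>:
  assumes "h \<in> transporters K L"
  shows "s h \<in> sX ` U" and "\<theta> h \<in> K"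
proof -
  obtain x where x: "x \<in> K" "x \<in> topspace X" "sX x = r h" "act x h \<in> L" "h \<in> topspace G"
    using assms unfolding transporters_def by blast
  then show "s h \<in> sX ` U" "\<theta> h \<in> K"
    using \<theta>_unique[OF x(2,5,3)] support_in_slice by auto
qed

lemma corr_inner_bump_nonzero:
  assumes "corr_inner X sX act G r b (\<lambda>y. of_real (\<psi> y)) h \<noteq> 0" "\<And>y. b y \<noteq> 0 \<Longrightarrow> y \<in> K"
  shows "h \<in> transporters K L"
proof -
  have h: "h \<in> topspace G" "s h \<in> sX ` U" and "b (\<theta> h) \<noteq> 0" "\<psi> (\<sigma> (s h)) \<noteq> 0"
    using assms(1) unfolding corr_inner_bump by (auto split: if_splits)
  then have "\<theta> h \<in> K" "act (\<theta> h) h \<in> L"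
    using assms(2) bump_support act_\<theta> by auto
  then show ?thesis
    using \<theta>_in[OF h] anchor_\<theta>[OF h] h(1) unfolding transporters_def by auto
qed

lemma Cc_extension_corr_inner_bump:
  assumes "Cc_extension X b"
  shows "Cc_extension G (corr_inner X sX act G r b (\<lambda>y. of_real (\<psi> y)))"
    (is "Cc_extension G ?f")
proof -
  obtain V K where V: "openin X V" "Hausdorff_space (subtopology X V)"
    "continuous_map (subtopology X V) euclidean b" and K: "compactin X K" "K \<subseteq> V" "\<And>y. y \<notin> K \<Longrightarrow> b y = 0"
    using Cc_extension_compact_support[OF assms] by metis
  let ?W1 = "{h \<in> topspace G. s h \<in> sX ` U}"
  define W where "W = {h \<in> topspace G. s h \<in> sX ` U \<and> \<theta> h \<in> V}"
  have WW1: "W \<subseteq> ?W1"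
    unfolding W_def by blast
  have "openin (subtopology G ?W1) {h \<in> topspace (subtopology G ?W1). \<theta> h \<in> V}"
    by (rule openin_continuous_map_preimage[OF continuous_\<theta>(3) V(1)])
  then have "openin G W"
    using openin_trans_full[OF _ continuous_\<theta>(1)] unfolding W_def by auto
  have "continuous_map (subtopology G W) (subtopology X V) \<theta>"
    using continuous_map_from_subtopology_mono[OF continuous_\<theta>(3) WW1]
    by (rule continuous_map_into_subtopology) (auto simp: W_def)
  then have "continuous_map (subtopology G W) euclidean (\<lambda>h. b (\<theta> h))"
    using continuous_map_compose[OF _ V(3)] by (simp add: o_def)
  moreover have "continuous_map (subtopology G W) euclideanreal (\<lambda>h. \<psi> (\<sigma> (s h)))"
    using continuous_map_compose[OF continuous_map_from_subtopology_mono[OF continuous_\<theta>(2) WW1] continuous_bump]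
    by (simp add: o_def)
  ultimately have "continuous_map (subtopology G W) euclidean (\<lambda>h. cnj (b (\<theta> h)) * of_real (\<psi> (\<sigma> (s h))))"
    by (simp add: continuous_map_atin tendsto_mult tendsto_cnj tendsto_of_real)
  then have cont: "continuous_map (subtopology G W) euclidean ?f"
    by (rule continuous_map_eq) (auto simp: corr_inner_bump W_def)
  have supp: "h \<in> transporters K L" if "?f h \<noteq> 0" for h
    using corr_inner_bump_nonzero[OF that] K(3) by blast
  have "transporters K L \<subseteq> W"
    using transporters_\<theta> K(2) unfolding W_def transporters_def by blast
  then have "compactin (subtopology G W) (transporters K L)"
    using compactin_transporters[OF K(1) compact_support] by (simp add: compactin_subtopology)
  with \<open>openin G W\<close> Hausdorff_\<theta>_preimage[OF V(2)] cont supp \<open>transporters K L \<subseteq> W\<close>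
  show ?thesis
    unfolding Cc_extension_def W_def by blast
qed

lemma frakS_corr_inner_bump:
  assumes "\<xi> \<in> frakS X"
  shows "corr_inner X sX act G r \<xi> (\<lambda>y. of_real (\<psi> y)) \<in> frakS G"
proof -
  obtain n and c :: "nat \<Rightarrow> complex" and b where b: "\<forall>k<n. Cc_extension X (b k)"
    and \<xi>: "\<xi> = (\<lambda>y. \<Sum>k<n. c k * b k y)"
    using assms unfolding frakS_def by blast
  have eq: "corr_inner X sX act G r \<xi> (\<lambda>y. of_real (\<psi> y)) h
      = (\<Sum>k<n. cnj (c k) * corr_inner X sX act G r (b k) (\<lambda>y. of_real (\<psi> y)) h)" for h
    unfolding corr_inner_bump \<xi>
    by (cases "h \<in> topspace G \<and> s h \<in> sX ` U") (auto simp: sum_distrib_right mult.assoc)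
  have "\<forall>k<n. Cc_extension G (corr_inner X sX act G r (b k) (\<lambda>y. of_real (\<psi> y)))"
    using b Cc_extension_corr_inner_bump by blast
  with eq show ?thesis
    unfolding frakS_def mem_Collect_eq
    by (intro exI[of _ n] exI[of _ "\<lambda>k. cnj (c k)"]
        exI[of _ "\<lambda>k. corr_inner X sX act G r (b k) (\<lambda>y. of_real (\<psi> y))"]) (simp add: fun_eq_iff)
qed

lemma invol_corr_inner_bump:
  assumes g: "g \<in> topspace G" and h: "h \<in> topspace G" "r h = r g" "s h \<in> sX ` U"
  shows "invol G i (corr_inner X sX act G r \<xi> (\<lambda>y. of_real (\<psi> y))) (m (i h) g)
    = \<xi> (act (\<theta> h) g) * of_real (\<psi> (\<sigma> (s h)))"
proof -
  define k where "k = m (i h) g"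
  have ih: "i h \<in> topspace G"
    using inverse_in h(1) .
  have k: "k \<in> topspace G" "i k \<in> topspace G" "s (i k) = s h" "i (i k) = k"
    using mult_in[OF ih g] range_mult[OF ih g] source_inverse inverse_in inverse_inverse range_inverse h
    unfolding k_def by auto
  have \<sigma>h: "\<sigma> (s h) \<in> topspace X" "sX (\<sigma> (s h)) = r (i h)"
    using section_in_slice[OF h(3)] slice_subset anchor_section[OF h(3)] range_inverse[OF h(1)] by auto
  have "\<theta> (i k) = act (\<sigma> (s h)) k"
    unfolding \<theta>_def using k(3,4) by simp
  also have "\<dots> = act (\<theta> h) g"
    using act_mult[OF \<sigma>h(1) ih g \<sigma>h(2)] source_inverse[OF h(1)] h(2) unfolding \<theta>_def k_def by simp
  finally show ?thesis
    using k h(3) unfolding k_def[symmetric] invol_def corr_inner_bump by simp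
qed

lemma corr_inner_bump_mult_invol:
  assumes g: "g \<in> topspace G" and h: "h \<in> topspace G" "r h = r g"
    and A: "finite A" "A \<subseteq> {x \<in> topspace X. sX x = r g}"
      "\<And>x. \<lbrakk>x \<in> topspace X; sX x = r g; \<xi> x \<noteq> 0\<rbrakk> \<Longrightarrow> x \<in> A"
  defines "a \<equiv> corr_inner X sX act G r \<xi> (\<lambda>y. of_real (\<psi> y))"
  shows "a h * invol G i a (m (i h) g)
    = (\<Sum>x\<in>A. cnj (\<xi> x) * \<xi> (act x g) * of_real ((\<psi> (act x h))\<^sup>2))"
    (is "_ = (\<Sum>x\<in>A. ?f x)")
proof -
  have zero: "?f x = 0" if "x \<in> A" "s h \<notin> sX ` U \<or> x \<noteq> \<theta> h" for x
    using bump_act_nonzero[of x h] that A(2) h by auto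
  show ?thesis
  proof (cases "s h \<in> sX ` U")
    case True
    have \<theta>h: "\<theta> h \<in> topspace X" "sX (\<theta> h) = r g" "act (\<theta> h) h = \<sigma> (s h)"
      using \<theta>_in[OF h(1) True] anchor_\<theta>[OF h(1) True] act_\<theta>[OF h(1) True] h(2) by auto
    have "a h * invol G i a (m (i h) g) = ?f (\<theta> h)"
      using invol_corr_inner_bump[OF g h True] True h(1) \<theta>h(3) unfolding a_def corr_inner_bump
      by (simp add: power2_eq_square)
    also have "\<dots> = (\<Sum>x\<in>{\<theta> h}. ?f x)"
      by simp
    also have "\<dots> = (\<Sum>x\<in>insert (\<theta> h) A. ?f x)"
      by (rule sum.mono_neutral_left) (use zero True A(1) in auto)
    also have "\<dots> = (\<Sum>x\<in>A. ?f x)"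
      by (rule sum.mono_neutral_right) (use A(3)[OF \<theta>h(1,2)] A(1) in auto)
    finally show ?thesis .
  next
    case False
    then have "(\<Sum>x\<in>A. ?f x) = 0"
      using zero by (intro sum.neutral) blast
    with False show ?thesis
      unfolding a_def corr_inner_bump by simp
  qed
qed

lemma conv_corr_inner_bump:
  assumes g: "g \<in> topspace G"
    and A: "finite A" "A \<subseteq> {x \<in> topspace X. sX x = r g}"
      "\<And>x. \<lbrakk>x \<in> topspace X; sX x = r g; \<xi> x \<noteq> 0\<rbrakk> \<Longrightarrow> x \<in> A"
  defines "a \<equiv> corr_inner X sX act G r \<xi> (\<lambda>y. of_real (\<psi> y))"
  shows "conv G r m i a (invol G i a) g
    = (\<Sum>x\<in>A. cnj (\<xi> x) * \<xi> (act x g) * of_real (orbit_sum (\<lambda>y. (\<psi> y)\<^sup>2) x))"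
proof -
  define F where "F h x = cnj (\<xi> x) * \<xi> (act x g) * of_real ((\<psi> (act x h))\<^sup>2)" for h x
  define S where "S = (\<Union>x\<in>A. transporters {x} L)"
  have AX: "x \<in> topspace X" "sX x = r g" if "x \<in> A" for x
    using that A(2) by auto
  have S: "finite S" "S \<subseteq> {h \<in> topspace G. r h = r g}"
    using A(1) finite_transporters[OF AX(1) compact_support] AX(2)
    unfolding S_def transporters_def by auto
  have "conv G r m i a (invol G i a) g = (\<Sum>\<^sub>\<infinity>h\<in>{h \<in> topspace G. r h = r g}. a h * invol G i a (m (i h) g))"
    unfolding conv_def using g by simp
  also have "\<dots> = (\<Sum>\<^sub>\<infinity>h\<in>{h \<in> topspace G. r h = r g}. \<Sum>x\<in>A. F h x)"
    using corr_inner_bump_mult_invol[OF g _ _ A] unfolding F_def a_def by (intro infsum_cong) simp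
  also have "\<dots> = (\<Sum>h\<in>S. \<Sum>x\<in>A. F h x)"
  proof (rule infsum_eq_sum_superset[OF S])
    show "(\<Sum>x\<in>A. F h x) = 0" if "h \<in> {h \<in> topspace G. r h = r g} - S" for h
      using that AX bump_vanishes unfolding F_def S_def transporters_def by (auto intro!: sum.neutral)
  qed
  also have "\<dots> = (\<Sum>x\<in>A. \<Sum>h\<in>S. F h x)"
    by (rule sum.swap)
  also have "\<dots> = (\<Sum>x\<in>A. cnj (\<xi> x) * \<xi> (act x g) * of_real (orbit_sum (\<lambda>y. (\<psi> y)\<^sup>2) x))"
  proof (rule sum.cong[OF refl])
    fix x assume x: "x \<in> A"
    have "(\<Sum>h\<in>S. F h x) = cnj (\<xi> x) * \<xi> (act x g) * of_real (\<Sum>h\<in>S. (\<psi> (act x h))\<^sup>2)"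
      unfolding F_def by (simp add: sum_distrib_left)
    also have "(\<Sum>h\<in>S. (\<psi> (act x h))\<^sup>2) = (\<Sum>h\<in>transporters {x} L. (\<psi> (act x h))\<^sup>2)"
      by (rule sum.mono_neutral_right[OF S(1)])
        (use x S(2) AX in \<open>auto simp: S_def transporters_def bump_vanishes\<close>)
    finally show "(\<Sum>h\<in>S. F h x) = cnj (\<xi> x) * \<xi> (act x g) * of_real (orbit_sum (\<lambda>y. (\<psi> y)\<^sup>2) x)"
      by (simp only: orbit_sum_eq_sum[OF AX(1)[OF x]])
  qed
  finally show ?thesis .
qed

end

section \<open>Partitions of unity along orbits\<close>

context free_proper_action
begin

lemma exists_slice_bump:
  assumes x: "x \<in> topspace X"
  obtains U L \<psi> N where "slice_bump G G0 r s m i X sX act U L \<psi>" "openin X N" "x \<in> N"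
    "\<And>y. y \<in> N \<Longrightarrow> \<psi> y = 1"
proof -
  obtain U where U: "openin X U" "x \<in> U" "openin (subtopology G G0) (sX ` U)"
    "homeomorphic_map (subtopology X U) (subtopology (subtopology G G0) (sX ` U)) sX"
    using local_homeomorphism_anchor x unfolding local_homeomorphism_def by blast
  have hom: "subtopology X U homeomorphic_space subtopology (subtopology G G0) (sX ` U)"
    using homeomorphic_map_imp_homeomorphic_space[OF U(4)] .
  have "Hausdorff_space (subtopology X U)"
    using homeomorphic_Hausdorff_space[OF hom] Hausdorff_space_subtopology[OF Hausdorff_units] by blast
  moreover have "locally_compact_space (subtopology X U)"
    using homeomorphic_locally_compact_space[OF hom]
      locally_compact_space_open_subset[OF disjI1[OF Hausdorff_units] locally_compact_units U(3)] by blast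
  moreover have "x \<in> topspace (subtopology X U)"
    using x U(2) by simp
  ultimately obtain N L \<psi> where b: "openin (subtopology X U) N" "x \<in> N" "compactin (subtopology X U) L"
    "N \<subseteq> L" "continuous_map (subtopology X U) euclideanreal \<psi>" "\<And>y. y \<in> N \<Longrightarrow> \<psi> y = 1"
    "\<And>y. y \<notin> L \<Longrightarrow> \<psi> y = 0"
    by (rule locally_compact_Hausdorff_bump) (rule that)
  have "slice_bump G G0 r s m i X sX act U L \<psi>"
    using U b(3,5,7) unfolding compactin_subtopology
    by (intro slice_bump.intro free_proper_action_axioms slice_bump_axioms.intro) auto
  with that b(2,6) openin_trans_full[OF b(1) U(1)] show ?thesis
    by blast
qed

lemma slice_bump_divide:
  assumes "slice_bump G G0 r s m i X sX act U L \<psi>"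
    and c: "continuous_map X euclideanreal c" "\<And>y. c y \<noteq> 0"
  shows "slice_bump G G0 r s m i X sX act U L (\<lambda>y. \<psi> y / c y)"
proof -
  interpret slice_bump G G0 r s m i X sX act U L \<psi>
    by (rule assms(1))
  have "continuous_map (subtopology X U) euclideanreal (\<lambda>y. \<psi> y / c y)"
    using continuous_bump continuous_map_from_subtopology[OF c(1)] c(2)
    by (intro continuous_map_real_divide) auto
  then show ?thesis
    using open_slice homeomorphic_slice open_anchor_slice compact_support support_in_slice bump_vanishes
    by (intro slice_bump.intro free_proper_action_axioms slice_bump_axioms.intro) auto
qed

lemma slice_bump_normalise:
  assumes J: "finite J" and sb: "\<And>j. j \<in> J \<Longrightarrow> slice_bump G G0 r s m i X sX act (U j) (L j) (\<psi> j)"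
  defines "F \<equiv> \<lambda>y. \<Sum>j\<in>J. orbit_sum (\<lambda>z. (\<psi> j z)\<^sup>2) y"
  shows "\<And>j. j \<in> J \<Longrightarrow> slice_bump G G0 r s m i X sX act (U j) (L j) (\<lambda>y. \<psi> j y / sqrt (max (F y) 1))"
    and "\<And>y. y \<in> topspace X \<Longrightarrow>
      (\<Sum>j\<in>J. orbit_sum (\<lambda>z. (\<psi> j z / sqrt (max (F z) 1))\<^sup>2) y) = F y / max (F y) 1"
proof -
  have "continuous_map X euclideanreal F"
    unfolding F_def using slice_bump.continuous_orbit_sum[OF sb] J
    by (intro continuous_map_sum) auto
  then show "slice_bump G G0 r s m i X sX act (U j) (L j) (\<lambda>y. \<psi> j y / sqrt (max (F y) 1))" if "j \<in> J" for j
    using sb[OF that] by (intro slice_bump_divide continuous_map_sqrt continuous_map_real_max) auto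
  fix y assume y: "y \<in> topspace X"
  have F_act: "F (act x g) = F x" if "x \<in> topspace X" "g \<in> topspace G" "sX x = r g" for x g
    unfolding F_def using orbit_sum_act[OF that] by simp
  have "(\<psi> j z / sqrt (max (F z) 1))\<^sup>2 = (\<psi> j z)\<^sup>2 * inverse (max (F z) 1)" for j z
    by (simp add: power_divide divide_inverse power_mult_distrib power_inverse)
  then have "orbit_sum (\<lambda>z. (\<psi> j z / sqrt (max (F z) 1))\<^sup>2) y
      = orbit_sum (\<lambda>z. (\<psi> j z)\<^sup>2) y * inverse (max (F y) 1)" for j
    using orbit_sum_mult_invariant[OF _ y, of "\<lambda>z. inverse (max (F z) 1)"] F_act by simp
  then show "(\<Sum>j\<in>J. orbit_sum (\<lambda>z. (\<psi> j z / sqrt (max (F z) 1))\<^sup>2) y) = F y / max (F y) 1"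
    unfolding F_def by (simp add: sum_distrib_right divide_inverse)
qed

lemma slice_bump_partition_of_unity:
  assumes C: "compactin X C"
  obtains J :: "'x set" and U L \<rho> where "finite J" "\<And>j. j \<in> J \<Longrightarrow> slice_bump G G0 r s m i X sX act (U j) (L j) (\<rho> j)"
    "\<And>y. y \<in> C \<Longrightarrow> (\<Sum>j\<in>J. orbit_sum (\<lambda>z. (\<rho> j z)\<^sup>2) y) = 1"
proof -
  have CX: "C \<subseteq> topspace X"
    using compactin_subset_topspace[OF C] .
  have "\<exists>U L \<psi> N. slice_bump G G0 r s m i X sX act U L \<psi> \<and> openin X N \<and> x \<in> N \<and> (\<forall>y\<in>N. \<psi> y = 1)"
    if "x \<in> topspace X" for x
    using exists_slice_bump[OF that] by metis
  then obtain U L \<psi> N where bump: "\<And>x. x \<in> topspace X \<Longrightarrow> slice_bump G G0 r s m i X sX act (U x) (L x) (\<psi> x)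
      \<and> openin X (N x) \<and> x \<in> N x \<and> (\<forall>y\<in>N x. \<psi> x y = 1)"
    by metis
  obtain J where J: "finite J" "J \<subseteq> C" "C \<subseteq> (\<Union>j\<in>J. N j)"
    using compactin_finite_subcover_indexed[OF C, of N] bump CX by blast
  have sb: "slice_bump G G0 r s m i X sX act (U j) (L j) (\<psi> j)" if "j \<in> J" for j
    using bump J(2) CX that by blast
  let ?F = "\<lambda>y. \<Sum>j\<in>J. orbit_sum (\<lambda>z. (\<psi> j z)\<^sup>2) y"
  have F_ge: "1 \<le> ?F y" if y: "y \<in> C" for y
  proof -
    obtain j where j: "j \<in> J" "y \<in> N j"
      using J(3) y by blast
    have "1 = (\<psi> j y)\<^sup>2"
      using bump J(2) CX j by fastforce
    also have "\<dots> \<le> orbit_sum (\<lambda>z. (\<psi> j z)\<^sup>2) y"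
      using slice_bump.sq_le_orbit_sum[OF sb[OF j(1)]] y CX by blast
    also have "\<dots> \<le> ?F y"
      using slice_bump.orbit_sum_nonneg[OF sb] y CX J(1) j(1)
      by (intro member_le_sum) auto
    finally show ?thesis .
  qed
  show ?thesis
  proof (rule that[OF J(1) slice_bump_normalise(1)[OF J(1) sb]])
    fix y assume y: "y \<in> C"
    then show "(\<Sum>j\<in>J. orbit_sum (\<lambda>z. (\<psi> j z / sqrt (max (?F z) 1))\<^sup>2) y) = 1"
      using slice_bump_normalise(2)[OF J(1) sb] F_ge[OF y] y CX by auto
  qed
qed

lemma corr_inner_self_eq_sum_conv:
  assumes \<xi>: "\<xi> \<in> frakS X" and J: "finite J" "\<And>j. j \<in> J \<Longrightarrow> slice_bump G G0 r s m i X sX act (U j) (L j) (\<rho> j)"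
    and one: "\<And>y. \<lbrakk>y \<in> topspace X; \<xi> y \<noteq> 0\<rbrakk> \<Longrightarrow> (\<Sum>j\<in>J. orbit_sum (\<lambda>z. (\<rho> j z)\<^sup>2) y) = 1"
  defines "a j \<equiv> corr_inner X sX act G r \<xi> (\<lambda>y. of_real (\<rho> j y))"
  shows "corr_inner X sX act G r \<xi> \<xi> g = (\<Sum>j\<in>J. conv G r m i (a j) (invol G i (a j)) g)"
proof (cases "g \<in> topspace G")
  case True
  define A where "A = {x \<in> topspace X. sX x = r g \<and> \<xi> x \<noteq> 0}"
  have A: "finite A" "A \<subseteq> {x \<in> topspace X. sX x = r g}"
    unfolding A_def using frakS_finite_fibre_support[OF Hausdorff_units local_homeomorphism_anchor \<xi>] by auto
  have "(\<Sum>j\<in>J. conv G r m i (a j) (invol G i (a j)) g)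
      = (\<Sum>j\<in>J. \<Sum>x\<in>A. cnj (\<xi> x) * \<xi> (act x g) * of_real (orbit_sum (\<lambda>z. (\<rho> j z)\<^sup>2) x))"
    unfolding a_def using slice_bump.conv_corr_inner_bump[OF J(2) True A] by (simp add: A_def)
  also have "\<dots> = (\<Sum>x\<in>A. cnj (\<xi> x) * \<xi> (act x g) * of_real (\<Sum>j\<in>J. orbit_sum (\<lambda>z. (\<rho> j z)\<^sup>2) x))"
    by (subst sum.swap) (simp add: sum_distrib_left)
  also have "\<dots> = (\<Sum>x\<in>A. cnj (\<xi> x) * \<xi> (act x g))"
    using one unfolding A_def by simp
  finally show ?thesis
    using corr_inner_eq_sum[OF \<xi> True] unfolding A_def by simp
qed (simp add: corr_inner_def conv_def)

lemma corr_inner_self_sum_conv: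
  assumes \<xi>: "\<xi> \<in> frakS X"
  shows "\<exists>(n::nat) a. (\<forall>k<n. a k \<in> frakS G) \<and>
    corr_inner X sX act G r \<xi> \<xi> = (\<lambda>g. \<Sum>k<n. conv G r m i (a k) (invol G i (a k)) g)"
proof -
  obtain C where C: "compactin X C" "\<And>y. y \<notin> C \<Longrightarrow> \<xi> y = 0"
    using frakS_compact_support[OF \<xi>] by blast
  obtain J :: "'x set" and U L \<rho> where J: "finite J" "\<And>j. j \<in> J \<Longrightarrow> slice_bump G G0 r s m i X sX act (U j) (L j) (\<rho> j)"
    and one: "\<And>y. y \<in> C \<Longrightarrow> (\<Sum>j\<in>J. orbit_sum (\<lambda>z. (\<rho> j z)\<^sup>2) y) = 1"
    using slice_bump_partition_of_unity[OF C(1)] by blast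
  obtain e where e: "bij_betw e {..<card J} J"
    using ex_bij_betw_nat_finite[OF J(1)] atLeast0LessThan by metis
  define a where "a k = corr_inner X sX act G r \<xi> (\<lambda>y. of_real (\<rho> (e k) y))" for k
  have "\<forall>k<card J. a k \<in> frakS G"
    unfolding a_def using slice_bump.frakS_corr_inner_bump[OF J(2) \<xi>] bij_betwE[OF e] by blast
  moreover have "corr_inner X sX act G r \<xi> \<xi> g = (\<Sum>k<card J. conv G r m i (a k) (invol G i (a k)) g)" for g
  proof -
    have "\<And>y. \<lbrakk>y \<in> topspace X; \<xi> y \<noteq> 0\<rbrakk> \<Longrightarrow> (\<Sum>j\<in>J. orbit_sum (\<lambda>z. (\<rho> j z)\<^sup>2) y) = 1"
      using one C(2) by blast
    from corr_inner_self_eq_sum_conv[OF \<xi> J this]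
    show ?thesis
      unfolding a_def
      using sum.reindex_bij_betw[OF e, where g = "\<lambda>j. conv G r m i (corr_inner X sX act G r \<xi> (\<lambda>y. of_real (\<rho> j y)))
        (invol G i (corr_inner X sX act G r \<xi> (\<lambda>y. of_real (\<rho> j y)))) g"]
      by simp
  qed
  ultimately show ?thesis
    by blast
qed

lemma corr_inner_self_nonzero:
  assumes \<xi>: "\<xi> \<in> frakS X" and nz: "\<xi> x0 \<noteq> 0"
  shows "corr_inner X sX act G r \<xi> \<xi> (sX x0) \<noteq> 0"
proof -
  have x0: "x0 \<in> topspace X"
    using frakS_zero_outside_topspace[OF \<xi>] nz by blast
  define u where "u = sX x0"
  have u: "u \<in> topspace G" "r u = u"
    using anchor_in_units[OF x0] units_subset range_unit unfolding u_def by auto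
  define A where "A = {x \<in> topspace X. sX x = r u \<and> \<xi> x \<noteq> 0}"
  have A: "finite A" "x0 \<in> A"
    unfolding A_def using frakS_finite_fibre_support[OF Hausdorff_units local_homeomorphism_anchor \<xi>]
      x0 nz u(2) u_def by auto
  have "corr_inner X sX act G r \<xi> \<xi> u = (\<Sum>x\<in>A. cnj (\<xi> x) * \<xi> (act x u))"
    using corr_inner_eq_sum[OF \<xi> u(1)] unfolding A_def .
  also have "\<dots> = (\<Sum>x\<in>A. of_real ((norm (\<xi> x))\<^sup>2))"
  proof (rule sum.cong[OF refl])
    fix x assume "x \<in> A"
    then have "act x u = x"
      using act_anchor u(2) unfolding A_def by auto
    then show "cnj (\<xi> x) * \<xi> (act x u) = of_real ((norm (\<xi> x))\<^sup>2)"
      using complex_norm_square[of "\<xi> x"] by (simp add: mult.commute)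
  qed
  also have "\<dots> = of_real (\<Sum>x\<in>A. (norm (\<xi> x))\<^sup>2)"
    by (rule of_real_sum[symmetric])
  finally have "corr_inner X sX act G r \<xi> \<xi> u = of_real (\<Sum>x\<in>A. (norm (\<xi> x))\<^sup>2)" .
  moreover have "0 < (\<Sum>x\<in>A. (norm (\<xi> x))\<^sup>2)"
    using A nz by (intro sum_pos2[of A x0]) auto
  ultimately have "corr_inner X sX act G r \<xi> \<xi> u \<noteq> 0"
    by (simp only: of_real_eq_0_iff less_irrefl)
  then show ?thesis
    unfolding u_def .
qed

end

theorem lemma7p6:
  fixes H :: "'h topology" and X :: "'x topology" and G :: "'g topology"
  assumes corr: "groupoid_correspondence H H0 rH sH mH iH X rX actL sX actR G G0 rG sG mG iG"
    and xi: "\<xi> \<in> frakS X"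
  shows "(\<exists>(n::nat) a. (\<forall>k<n. a k \<in> frakS G) \<and>
            corr_inner X sX actR G rG \<xi> \<xi> =
              (\<lambda>g. \<Sum>k<n. conv G rG mG iG (a k) (invol G iG (a k)) g))
         \<and> (\<xi> \<noteq> (\<lambda>_. 0) \<longrightarrow> corr_inner X sX actR G rG \<xi> \<xi> \<noteq> (\<lambda>_. 0))"
proof -
  interpret free_proper_action G G0 rG sG mG iG X sX actR
    using groupoid_correspondence_free_proper_action[OF corr] .
  have "corr_inner X sX actR G rG \<xi> \<xi> \<noteq> (\<lambda>_. 0)" if nz: "\<xi> \<noteq> (\<lambda>_. 0)"
  proof -
    obtain x0 where "\<xi> x0 \<noteq> 0"
      using nz by auto
    from corr_inner_self_nonzero[OF xi this] show ?thesis
      by auto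
  qed
  with corr_inner_self_sum_conv[OF xi] show ?thesis
    by blast
qed

end
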